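(* Let $1\le d_1\le d_2$, $r\ge1$, $l_1,\dots,l_r\in\{1,\dots,d_1\}$ with $\sum_{j=1}^r l_j\le d_1$, and $l=d_1-\sum_{j=1}^r(l_j-1)$. Let $A\in\mathbf M_{\mathbb C}(d_1\times d_2;l_1,\dots,l_r)$ have a singular value decomposition $A=P_LDP_R^*$ with $P_L\in\mathbf U(d_1)$, $P_R\in\mathbf U(d_2)$ and $D$ a real $d_1\times d_2$ diagonal matrix, and suppose $0$ is not an eigenvalue of $AA^*$ and $AA^*$ has exactly $l$ distinct eigenvalues. Then for every $\varepsilon>0$ there is $\delta>0$ such that for every $B\in\mathbf M_{\mathbb C}(d_1\times d_2;l_1,\dots,l_r)$ with $\max_{1\le i\le d_1,1\le j\le d_2}|A_{i,j}-B_{i,j}|<\delta$, $0$ is not an eigenvalue of $BB^*$, $BB^*$ has exactly $l$ distinct eigenvalues, and there is a singular value decomposition $B=Q_LFQ_R^*$ with $Q_L\in\mathbf U(d_1)$, $Q_R\in\mathbf U(d_2)$, $F$ a real $d_1\times d_2$ diagonal matrix, such that $\max_{1\le i\le d_1}|D_{i,i}-F_{i,i}|<\varepsilon$, $\max_{1\le i,j\le d_1}|(Q_L)_{i,j}-(P_L)_{i,j}|<\varepsilon$ and $\max_{1\le i,j\le d_2}|(Q_R)_{i,j}-(P_R)_{i,j}|<\varepsilon$.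
   Context: $\mathbf U(n)$ is the group of $n\times n$ unitary matrices. A $d_1\times d_2$ matrix is diagonal if its $(i,j)$ entry vanishes for $i\ne j$. For $x\in\mathbb{C}^{d_1\times d_2}$ let $S_1(x)\le\cdots\le S_{d_1}(x)$ be its singular values (nonnegative square roots of the eigenvalues of $xx^*$). $\mathbf M_{\mathbb C}(d_1\times d_2;l_1,\dots,l_r)$ is the set of $x\in\mathbb{C}^{d_1\times d_2}$ for which there exist pairwise disjoint $J_1,\dots,J_r\subseteq\{1,\dots,d_1\}$ with $|J_j|=l_j$ such that, for each $j$, the values $S_i(x)$, $i\in J_j$, are all equal. *)

theory Defs
  imports "Jordan_Normal_Form.Matrix" "Jordan_Normal_Form.Char_Poly"
begin

definition ctrans :: "complex mat \<Rightarrow> complex mat" where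
  "ctrans x = mat (dim_col x) (dim_row x) (\<lambda>(i,j). cnj (x $$ (j,i)))"

definition unitary_mat :: "nat \<Rightarrow> complex mat set" where
  "unitary_mat n = {U. U \<in> carrier_mat n n \<and> ctrans U * U = 1\<^sub>m n \<and> U * ctrans U = 1\<^sub>m n}"

definition real_diag_mat :: "nat \<Rightarrow> nat \<Rightarrow> complex mat set" where
  "real_diag_mat d1 d2 = {D. D \<in> carrier_mat d1 d2 \<and>
     (\<forall>i<d1. \<forall>j<d2. i \<noteq> j \<longrightarrow> D $$ (i,j) = 0) \<and>
     (\<forall>i<d1. \<forall>j<d2. D $$ (i,j) \<in> \<real>)}"

text \<open>Singular values S_1 \<le> ... \<le> S_{d1} of x (0-based list): the nonnegative square roots
  of the eigenvalues of x x^*, counted with multiplicity, sorted increasingly.\<close>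
definition sing_vals :: "complex mat \<Rightarrow> real list" where
  "sing_vals x = (THE s. length s = dim_row x \<and> sorted s \<and> (\<forall>v\<in>set s. 0 \<le> v) \<and>
      char_poly (x * ctrans x) = (\<Prod>v\<leftarrow>s. [:- complex_of_real (v\<^sup>2), 1:]))"

text \<open>M_C(d1 x d2; l_1,...,l_r), with ls = [l_1,...,l_r] and 0-based indices.\<close>
definition M_C :: "nat \<Rightarrow> nat \<Rightarrow> nat list \<Rightarrow> complex mat set" where
  "M_C d1 d2 ls = {x. x \<in> carrier_mat d1 d2 \<and>
     (\<exists>J :: nat \<Rightarrow> nat set.
        (\<forall>j<length ls. J j \<subseteq> {0..<d1} \<and> card (J j) = ls ! j) \<and>
        (\<forall>j<length ls. \<forall>k<length ls. j \<noteq> k \<longrightarrow> J j \<inter> J k = {}) \<and>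
        (\<forall>j<length ls. \<forall>i\<in>J j. \<forall>i'\<in>J j. sing_vals x ! i = sing_vals x ! i'))}"

end

theory Submission
  imports Defs "HOL-Analysis.L2_Norm"
begin

text \<open>
  Write \<open>A = P\<^sub>L D P\<^sub>R\<^sup>*\<close>: the columns \<open>u\<^sub>j\<close> of \<open>P\<^sub>L\<close> are eigenvectors of \<open>A A\<^sup>*\<close> with eigenvalues
  \<open>\<sigma>\<^sub>j\<^sup>2\<close>, and \<open>A\<^sup>* u\<^sub>j = \<sigma>\<^sub>j p\<^sub>j\<close> for the columns \<open>p\<^sub>j\<close> of \<open>P\<^sub>R\<close>. If \<open>B\<close> is entrywise close to \<open>A\<close>,
  then \<open>B B\<^sup>*\<close> is close to \<open>A A\<^sup>*\<close> as an operator, so every eigenvalue of either matrix is near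
  one of the other. Membership of \<open>B\<close> in \<open>M_C(d\<^sub>1 \<times> d\<^sub>2; l\<^sub>1, \<dots>, l\<^sub>r)\<close> allows \<open>B B\<^sup>*\<close> at most \<open>l\<close>
  distinct eigenvalues, as many as \<open>A A\<^sup>*\<close> has; hence no cluster of eigenvalues splits, and
  projecting each \<open>u\<^sub>j\<close> onto the eigenspace of \<open>B B\<^sup>*\<close> for its cluster moves it by
  \<open>O(\<parallel>B - A\<parallel> / gap)\<close>. A Gram--Schmidt process that respects eigenspaces turns these projections
  into an orthonormal eigenbasis \<open>q\<^sub>j\<close> of \<open>B B\<^sup>*\<close> close to the \<open>u\<^sub>j\<close>. With \<open>f\<^sub>j\<close> the square roots of
  the eigenvalues, signed like the \<open>\<sigma>\<^sub>j\<close>, the vectors \<open>B\<^sup>* q\<^sub>j / f\<^sub>j\<close> are orthonormal and close to the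
  \<open>p\<^sub>j\<close>; completing them by Gram--Schmidt gives \<open>Q\<^sub>R\<close>, and \<open>B = Q\<^sub>L F Q\<^sub>R\<^sup>*\<close>.
\<close>

section \<open>Complex vectors as functions\<close>

text \<open>A vector of \<open>\<complex>\<^sup>n\<close> is a function \<open>nat \<Rightarrow> complex\<close> of which only the
  first \<open>n\<close> values matter.\<close>

definition cinner :: "nat \<Rightarrow> (nat \<Rightarrow> complex) \<Rightarrow> (nat \<Rightarrow> complex) \<Rightarrow> complex" where
  "cinner n x y = (\<Sum>i<n. cnj (x i) * y i)"

definition cnorm :: "nat \<Rightarrow> (nat \<Rightarrow> complex) \<Rightarrow> real" where
  "cnorm n x = L2_set (\<lambda>i. cmod (x i)) {..<n}"

definition orthonormal :: "nat \<Rightarrow> nat \<Rightarrow> (nat \<Rightarrow> nat \<Rightarrow> complex) \<Rightarrow> bool" where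
  "orthonormal n N v \<longleftrightarrow> (\<forall>i<N. \<forall>j<N. cinner n (v i) (v j) = (if i = j then 1 else 0))"

lemma cnorm_nonneg[simp]: "0 \<le> cnorm n x"
  unfolding cnorm_def by (rule L2_set_nonneg)

lemma cnorm_sq: "(cnorm n x)\<^sup>2 = (\<Sum>i<n. (cmod (x i))\<^sup>2)"
  unfolding cnorm_def L2_set_def by (simp add: sum_nonneg)

lemma cnj_mult_self: "cnj z * z = (complex_of_real (cmod z))\<^sup>2"
  using complex_norm_square[of z] by (simp add: mult.commute)

lemma cinner_self: "cinner n x x = complex_of_real ((cnorm n x)\<^sup>2)"
  unfolding cinner_def cnorm_sq of_real_sum by (simp add: cnj_mult_self)

lemma cinner_cong:
  "(\<And>i. i < n \<Longrightarrow> x i = x' i) \<Longrightarrow> (\<And>i. i < n \<Longrightarrow> y i = y' i) \<Longrightarrow> cinner n x y = cinner n x' y'"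
  unfolding cinner_def by (rule sum.cong, auto)

lemma cnorm_cong: "(\<And>i. i < n \<Longrightarrow> x i = x' i) \<Longrightarrow> cnorm n x = cnorm n x'"
  unfolding cnorm_def by (rule L2_set_cong, auto)

lemma cinner_commute: "cinner n y x = cnj (cinner n x y)"
  unfolding cinner_def by (simp add: mult.commute)

lemma norm_le_cnorm: "i < n \<Longrightarrow> cmod (x i) \<le> cnorm n x"
  unfolding cnorm_def by (rule member_le_L2_set, auto)

lemma cinner_Cauchy_Schwarz: "cmod (cinner n x y) \<le> cnorm n x * cnorm n y"
proof -
  have "cmod (cinner n x y) \<le> (\<Sum>i<n. cmod (cnj (x i) * y i))" unfolding cinner_def by (rule norm_sum)
  also have "\<dots> = (\<Sum>i<n. \<bar>cmod (x i)\<bar> * \<bar>cmod (y i)\<bar>)" by (simp add: norm_mult)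
  also have "\<dots> \<le> cnorm n x * cnorm n y" unfolding cnorm_def by (rule L2_set_mult_ineq)
  finally show ?thesis .
qed

lemma cnorm_triangle: "cnorm n (\<lambda>i. x i + y i) \<le> cnorm n x + cnorm n y"
proof -
  have "cnorm n (\<lambda>i. x i + y i) \<le> L2_set (\<lambda>i. cmod (x i) + cmod (y i)) {..<n}"
    unfolding cnorm_def by (rule L2_set_mono, auto simp: norm_triangle_ineq)
  also have "\<dots> \<le> cnorm n x + cnorm n y" unfolding cnorm_def by (rule L2_set_triangle_ineq)
  finally show ?thesis .
qed

lemma cnorm_scale: "cnorm n (\<lambda>i. c * x i) = cmod c * cnorm n x"
  unfolding cnorm_def by (simp add: norm_mult L2_set_right_distrib)

lemma cnorm_scale_real: "cnorm n (\<lambda>i. complex_of_real r * x i) = \<bar>r\<bar> * cnorm n x"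
  by (simp add: cnorm_scale)

lemma cnorm_minus_commute: "cnorm n (\<lambda>i. x i - y i) = cnorm n (\<lambda>i. y i - x i)"
  unfolding cnorm_def by (simp add: norm_minus_commute)

lemma cnorm_diff_triangle: "cnorm n (\<lambda>i. x i - z i) \<le> cnorm n (\<lambda>i. x i - y i) + cnorm n (\<lambda>i. y i - z i)"
  using cnorm_triangle[of n "\<lambda>i. x i - y i" "\<lambda>i. y i - z i"] by simp

lemma cnorm_le_add_diff: "cnorm n x \<le> cnorm n y + cnorm n (\<lambda>i. x i - y i)"
  using cnorm_triangle[of n y "\<lambda>i. x i - y i"] by simp

lemma cnorm_diff_le: "cnorm n (\<lambda>i. x i - y i) \<le> cnorm n x + cnorm n y"
  using cnorm_triangle[of n x "\<lambda>i. - y i"] cnorm_scale[of n "- 1" y] by simp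

lemma cnorm_sum_le: "finite S \<Longrightarrow> cnorm n (\<lambda>i. \<Sum>k\<in>S. f k i) \<le> (\<Sum>k\<in>S. cnorm n (f k))"
proof (induction S rule: finite_induct)
  case empty
  then show ?case unfolding cnorm_def by (simp add: L2_set_0')
next
  case (insert a S)
  have "cnorm n (\<lambda>i. \<Sum>k\<in>insert a S. f k i) = cnorm n (\<lambda>i. f a i + (\<Sum>k\<in>S. f k i))"
    using insert by simp
  also have "\<dots> \<le> cnorm n (f a) + cnorm n (\<lambda>i. \<Sum>k\<in>S. f k i)" by (rule cnorm_triangle)
  also have "\<dots> \<le> cnorm n (f a) + (\<Sum>k\<in>S. cnorm n (f k))" using insert by simp
  finally show ?case using insert by simp
qed

lemma cnorm_eq_0_iff: "cnorm n x = 0 \<longleftrightarrow> (\<forall>i<n. x i = 0)"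
  unfolding cnorm_def by (subst L2_set_eq_0_iff, auto)

lemma cnorm_eq_1_iff: "cnorm n x = 1 \<longleftrightarrow> cinner n x x = 1"
proof -
  have "cinner n x x = 1 \<longleftrightarrow> (cnorm n x)\<^sup>2 = 1"
    unfolding cinner_self by (metis of_real_eq_1_iff of_real_power)
  also have "\<dots> \<longleftrightarrow> cnorm n x = 1" using power2_eq_iff_nonneg[of "cnorm n x" 1] by simp
  finally show ?thesis ..
qed

lemma orthonormal_cnorm: "orthonormal n N v \<Longrightarrow> j < N \<Longrightarrow> cnorm n (v j) = 1"
  unfolding orthonormal_def cnorm_eq_1_iff by auto

lemma orthonormal_mono: "orthonormal n N v \<Longrightarrow> k \<le> N \<Longrightarrow> orthonormal n k v"
  unfolding orthonormal_def by auto

lemma cinner_sum_right: "cinner n x (\<lambda>i. \<Sum>k\<in>S. c k * y k i) = (\<Sum>k\<in>S. c k * cinner n x (y k))"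
  unfolding cinner_def by (simp add: sum_distrib_left algebra_simps sum.swap[of _ S])

lemma cinner_sum_left: "cinner n (\<lambda>i. \<Sum>k\<in>S. c k * y k i) x = (\<Sum>k\<in>S. cnj (c k) * cinner n (y k) x)"
  unfolding cinner_def by (simp add: sum_distrib_left algebra_simps sum.swap[of _ S])

lemma cinner_diff_right: "cinner n x (\<lambda>i. y i - z i) = cinner n x y - cinner n x z"
  unfolding cinner_def by (simp add: algebra_simps sum_subtractf)

lemma cinner_diff_left: "cinner n (\<lambda>i. y i - z i) x = cinner n y x - cinner n z x"
  unfolding cinner_def by (simp add: algebra_simps sum_subtractf)

lemma cinner_scale_right: "cinner n x (\<lambda>i. c * y i) = c * cinner n x y"
  unfolding cinner_def by (simp add: algebra_simps sum_distrib_left)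

lemma cinner_scale_left: "cinner n (\<lambda>i. c * y i) x = cnj c * cinner n y x"
  unfolding cinner_def by (simp add: algebra_simps sum_distrib_left)

lemma cinner_orthonormal_sum:
  assumes on: "orthonormal n N v" and j: "j < N" and S: "S \<subseteq> {..<N}"
  shows "cinner n (v j) (\<lambda>i. \<Sum>k\<in>S. c k * v k i) = (if j \<in> S then c j else 0)"
proof -
  have fin: "finite S" using S finite_subset by blast
  have "cinner n (v j) (\<lambda>i. \<Sum>k\<in>S. c k * v k i) = (\<Sum>k\<in>S. c k * cinner n (v j) (v k))"
    by (rule cinner_sum_right)
  also have "\<dots> = (\<Sum>k\<in>S. if k = j then c k else 0)"
    by (rule sum.cong, simp, insert on S j, auto simp: orthonormal_def)
  also have "\<dots> = (if j \<in> S then c j else 0)" using fin by simp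
  finally show ?thesis .
qed

lemma cnorm_orthonormal_sum:
  assumes on: "orthonormal n N v" and S: "S \<subseteq> {..<N}"
  shows "(cnorm n (\<lambda>i. \<Sum>k\<in>S. c k * v k i))\<^sup>2 = (\<Sum>k\<in>S. (cmod (c k))\<^sup>2)"
proof -
  let ?x = "\<lambda>i. \<Sum>k\<in>S. c k * v k i"
  have "complex_of_real ((cnorm n ?x)\<^sup>2) = cinner n ?x ?x" by (rule cinner_self[symmetric])
  also have "\<dots> = (\<Sum>k\<in>S. cnj (c k) * cinner n (v k) ?x)" by (rule cinner_sum_left)
  also have "\<dots> = (\<Sum>k\<in>S. cnj (c k) * c k)"
    using S by (intro sum.cong refl) (subst cinner_orthonormal_sum[OF on _ S], auto)
  also have "\<dots> = complex_of_real (\<Sum>k\<in>S. (cmod (c k))\<^sup>2)"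
    by (simp add: cnj_mult_self)
  finally show ?thesis using of_real_eq_iff by blast
qed

definition cnormalize :: "nat \<Rightarrow> (nat \<Rightarrow> complex) \<Rightarrow> nat \<Rightarrow> complex" where
  "cnormalize n x = (\<lambda>i. complex_of_real (1 / cnorm n x) * x i)"

lemma cnorm_cnormalize: "cnorm n x \<noteq> 0 \<Longrightarrow> cnorm n (cnormalize n x) = 1"
  unfolding cnormalize_def cnorm_scale_real by simp

lemma cinner_cnormalize_right: "cinner n y (cnormalize n x) = complex_of_real (1 / cnorm n x) * cinner n y x"
  unfolding cnormalize_def by (rule cinner_scale_right)

lemma cnormalize_close:
  assumes u: "cnorm n u = 1" and zu: "cnorm n (\<lambda>i. z i - u i) \<le> \<rho>" and r: "\<rho> \<le> 1/2"
  shows "cnorm n z \<noteq> 0" "cnorm n (\<lambda>i. cnormalize n z i - u i) \<le> 2 * \<rho>"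
proof -
  let ?t = "cnorm n z"
  have l1: "1 \<le> ?t + \<rho>" using cnorm_le_add_diff[of n u z] cnorm_minus_commute[of n u z] u zu by linarith
  have l2: "?t \<le> 1 + \<rho>" using cnorm_le_add_diff[of n z u] u zu by linarith
  show "?t \<noteq> 0" using l1 r by linarith
  have tp: "?t > 0" using l1 r by linarith
  have "cnorm n (\<lambda>i. cnormalize n z i - z i) = cnorm n (\<lambda>i. complex_of_real (1 / ?t - 1) * z i)"
    unfolding cnormalize_def by (rule cnorm_cong, simp add: algebra_simps)
  also have "\<dots> = \<bar>1 / ?t - 1\<bar> * ?t" by (rule cnorm_scale_real)
  also have "\<dots> = \<bar>(1 / ?t - 1) * ?t\<bar>" using tp by (simp add: abs_mult)
  also have "\<dots> = \<bar>1 - ?t\<bar>" using tp by (simp add: left_diff_distrib)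
  also have "\<dots> \<le> \<rho>" using l1 l2 by linarith
  finally have "cnorm n (\<lambda>i. cnormalize n z i - z i) \<le> \<rho>" .
  thus "cnorm n (\<lambda>i. cnormalize n z i - u i) \<le> 2 * \<rho>"
    using cnorm_diff_triangle[of n "cnormalize n z" u z] zu by linarith
qed

definition orth_residual :: "nat \<Rightarrow> nat \<Rightarrow> (nat \<Rightarrow> nat \<Rightarrow> complex) \<Rightarrow> (nat \<Rightarrow> complex) \<Rightarrow> nat \<Rightarrow> complex" where
  "orth_residual n k v x = (\<lambda>i. x i - (\<Sum>l<k. cinner n (v l) x * v l i))"

lemma cinner_orth_residual:
  assumes "orthonormal n k v" and "j < k"
  shows "cinner n (v j) (orth_residual n k v x) = 0"
  using assms cinner_orthonormal_sum[OF assms, of "{..<k}"]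
  unfolding orth_residual_def by (simp add: cinner_diff_right)

lemma orthonormal_extend:
  assumes on: "orthonormal n k v" and x: "cnorm n x = 1" and orth: "\<forall>i<k. cinner n (v i) x = 0"
  shows "orthonormal n (Suc k) (v(k := x))"
  unfolding orthonormal_def
proof (intro allI impI)
  fix i j assume "i < Suc k" and "j < Suc k"
  then consider "i < k" "j < k" | "i = k" "j < k" | "i < k" "j = k" | "i = k" "j = k" by linarith
  thus "cinner n ((v(k := x)) i) ((v(k := x)) j) = (if i = j then 1 else 0)"
  proof cases
    case 1
    thus ?thesis using on unfolding orthonormal_def by simp
  next
    case 2
    thus ?thesis using orth cinner_commute[of n x "v j"] by simp
  next
    case 3
    thus ?thesis using orth by simp
  next
    case 4
    thus ?thesis using x cnorm_eq_1_iff by simp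
  qed
qed

text \<open>Some standard basis vector has a nonzero residual: otherwise every coordinate vector would
  lie in the span of the \<open>v\<^sub>l\<close>, and summing \<open>\<Sum>\<^sub>l |v\<^sub>l j|\<^sup>2 = 1\<close> over \<open>j < n\<close> would give \<open>n = k\<close>.\<close>

lemma orthonormal_extend_unit:
  assumes on: "orthonormal n k v" and kn: "k < n"
  shows "\<exists>x. cnorm n x = 1 \<and> (\<forall>i<k. cinner n (v i) x = 0)"
proof -
  define e where "e j = (\<lambda>i::nat. if i = j then (1::complex) else 0)" for j :: nat
  have "\<exists>j<n. cnorm n (orth_residual n k v (e j)) \<noteq> 0"
  proof (rule ccontr)
    assume "\<not> ?thesis"
    hence zero: "orth_residual n k v (e j) j = 0" if "j < n" for j using that cnorm_eq_0_iff by blast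
    have one: "(\<Sum>l<k. (cmod (v l j))\<^sup>2) = 1" if j: "j < n" for j
    proof -
      have "cinner n (v l) (e j) = cnj (v l j)" for l
        unfolding cinner_def e_def using j by (simp add: if_distrib cong: if_cong)
      hence "(1::complex) = (\<Sum>l<k. cnj (v l j) * v l j)"
        using zero[OF j] unfolding orth_residual_def e_def by simp
      hence "(1::complex) = (\<Sum>l<k. complex_of_real ((cmod (v l j))\<^sup>2))"
        by (simp add: cnj_mult_self)
      hence "complex_of_real (\<Sum>l<k. (cmod (v l j))\<^sup>2) = 1" by (simp only: of_real_sum eq_commute)
      thus ?thesis by (simp only: of_real_eq_1_iff)
    qed
    have "real n = (\<Sum>j<n. \<Sum>l<k. (cmod (v l j))\<^sup>2)" using one by simp
    also have "\<dots> = (\<Sum>l<k. (cnorm n (v l))\<^sup>2)" unfolding cnorm_sq by (rule sum.swap)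
    also have "\<dots> = real k" using orthonormal_cnorm[OF on] by simp
    finally show False using kn by simp
  qed
  then obtain j where "cnorm n (orth_residual n k v (e j)) \<noteq> 0" by auto
  with on show ?thesis
    by (intro exI[of _ "cnormalize n (orth_residual n k v (e j))"])
      (simp add: cnorm_cnormalize cinner_cnormalize_right cinner_orth_residual)
qed

lemma orthonormal_complete:
  assumes on: "orthonormal n k v" and kn: "k \<le> n"
  shows "\<exists>w. orthonormal n n w \<and> (\<forall>i<k. w i = v i)"
proof -
  have "\<exists>w. orthonormal n (k + d) w \<and> (\<forall>i<k. w i = v i)" if "k + d \<le> n" for d
    using that
  proof (induction d)
    case 0
    then show ?case using on by auto
  next
    case (Suc d)
    then obtain w where w: "orthonormal n (k + d) w" "\<forall>i<k. w i = v i" by auto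
    then obtain x where x: "cnorm n x = 1" "\<forall>i<k + d. cinner n (w i) x = 0"
      using orthonormal_extend_unit[OF w(1)] Suc.prems by auto
    define w' where "w' = w(k + d := x)"
    have "orthonormal n (Suc (k + d)) w'" unfolding w'_def by (rule orthonormal_extend[OF w(1) x])
    moreover have "\<forall>i<k. w' i = v i" using w(2) unfolding w'_def by simp
    ultimately show ?case by auto
  qed
  from this[of "n - k"] kn show ?thesis by auto
qed

section \<open>Matrices acting on function vectors\<close>

definition mat_app :: "complex mat \<Rightarrow> (nat \<Rightarrow> complex) \<Rightarrow> nat \<Rightarrow> complex" where
  "mat_app M x = (\<lambda>i. if i < dim_row M then (\<Sum>k<dim_col M. M $$ (i,k) * x k) else 0)"

definition col_fn :: "complex mat \<Rightarrow> nat \<Rightarrow> nat \<Rightarrow> complex" where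
  "col_fn M j = (\<lambda>i. if i < dim_row M then M $$ (i,j) else 0)"

definition mat_of_col_fns :: "nat \<Rightarrow> nat \<Rightarrow> (nat \<Rightarrow> nat \<Rightarrow> complex) \<Rightarrow> complex mat" where
  "mat_of_col_fns n N v = mat n N (\<lambda>(i,j). v j i)"

lemma mat_of_col_fns_carrier[simp]: "mat_of_col_fns n N v \<in> carrier_mat n N"
  unfolding mat_of_col_fns_def by simp

lemma mat_of_col_fns_dim[simp]:
  "dim_row (mat_of_col_fns n N v) = n" "dim_col (mat_of_col_fns n N v) = N"
  unfolding mat_of_col_fns_def by simp_all

lemma mat_of_col_fns_index[simp]: "i < n \<Longrightarrow> j < N \<Longrightarrow> mat_of_col_fns n N v $$ (i,j) = v j i"
  unfolding mat_of_col_fns_def by simp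

lemma ctrans_carrier[simp]: "ctrans M \<in> carrier_mat (dim_col M) (dim_row M)"
  unfolding ctrans_def by simp

lemma ctrans_carrier_mat: "M \<in> carrier_mat p q \<Longrightarrow> ctrans M \<in> carrier_mat q p"
  unfolding ctrans_def by auto

lemma ctrans_dim[simp]: "dim_row (ctrans M) = dim_col M" "dim_col (ctrans M) = dim_row M"
  unfolding ctrans_def by simp_all

lemma ctrans_index[simp]: "i < dim_col M \<Longrightarrow> j < dim_row M \<Longrightarrow> ctrans M $$ (i,j) = cnj (M $$ (j,i))"
  unfolding ctrans_def by simp

lemma ctrans_ctrans[simp]: "ctrans (ctrans M) = M"
  by (rule eq_matI) (auto simp: ctrans_def)

lemma ctrans_mult:
  assumes "M \<in> carrier_mat p q" and "N \<in> carrier_mat q r"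
  shows "ctrans (M * N) = ctrans N * ctrans M"
  using assms by (intro eq_matI) (auto simp: ctrans_def scalar_prod_def mult.commute)

lemma gram_carrier: "M \<in> carrier_mat p q \<Longrightarrow> M * ctrans M \<in> carrier_mat p p"
  using ctrans_carrier_mat by (metis mult_carrier_mat)

lemma gram_hermitian: "M \<in> carrier_mat p q \<Longrightarrow> ctrans (M * ctrans M) = M * ctrans M"
  using ctrans_mult[OF _ ctrans_carrier_mat] by simp

lemma mat_mult_index_sum:
  assumes "M \<in> carrier_mat p q" and "N \<in> carrier_mat q r" and "i < p" and "j < r"
  shows "(M * N) $$ (i,j) = (\<Sum>l<q. M $$ (i,l) * N $$ (l,j))"
  using assms by (simp add: scalar_prod_def atLeast0LessThan)

lemma mat_app_mult:
  assumes M: "M \<in> carrier_mat p q" and N: "N \<in> carrier_mat q r"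
  shows "mat_app (M * N) x = mat_app M (mat_app N x)"
proof
  fix i
  show "mat_app (M * N) x i = mat_app M (mat_app N x) i"
  proof (cases "i < p")
    case True
    have "mat_app (M * N) x i = (\<Sum>k<r. (\<Sum>j<q. M $$ (i,j) * N $$ (j,k)) * x k)"
      using M N True unfolding mat_app_def by (simp add: scalar_prod_def atLeast0LessThan)
    also have "\<dots> = (\<Sum>j<q. M $$ (i,j) * (\<Sum>k<r. N $$ (j,k) * x k))"
      by (simp add: sum_distrib_left sum_distrib_right algebra_simps sum.swap[of _ "{..<r}"])
    also have "\<dots> = mat_app M (mat_app N x) i" using M N True unfolding mat_app_def by simp
    finally show ?thesis .
  qed (use M N in \<open>simp add: mat_app_def\<close>)
qed

lemma mat_app_col_fn:
  assumes "M \<in> carrier_mat p q" and "N \<in> carrier_mat q r" and "i < p" and "j < r"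
  shows "mat_app M (col_fn N j) i = (M * N) $$ (i,j)"
  using assms by (simp add: mat_app_def col_fn_def scalar_prod_def atLeast0LessThan)

lemma cinner_mat_app_ctrans:
  assumes M: "M \<in> carrier_mat p q"
  shows "cinner p (mat_app M x) y = cinner q x (mat_app (ctrans M) y)"
proof -
  have "cinner p (mat_app M x) y = (\<Sum>i<p. \<Sum>k<q. cnj (M $$ (i,k)) * cnj (x k) * y i)"
    using M unfolding cinner_def mat_app_def by (simp add: sum_distrib_right)
  also have "\<dots> = (\<Sum>k<q. \<Sum>i<p. cnj (M $$ (i,k)) * cnj (x k) * y i)" by (rule sum.swap)
  also have "\<dots> = cinner q x (mat_app (ctrans M) y)"
    using M unfolding cinner_def mat_app_def by (simp add: sum_distrib_left algebra_simps)
  finally show ?thesis .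
qed

lemma mat_app_cong: "(\<And>k. k < dim_col M \<Longrightarrow> x k = y k) \<Longrightarrow> mat_app M x = mat_app M y"
  unfolding mat_app_def by (intro ext, auto intro: sum.cong)

lemma mat_app_sum:
  "finite S \<Longrightarrow> mat_app M (\<lambda>k. \<Sum>j\<in>S. c j * v j k) = (\<lambda>i. \<Sum>j\<in>S. c j * mat_app M (v j) i)"
  unfolding mat_app_def by (intro ext, auto simp: sum_distrib_left algebra_simps intro: sum.swap)

lemma mat_app_scale: "mat_app M (\<lambda>k. c * x k) = (\<lambda>i. c * mat_app M x i)"
  unfolding mat_app_def by (intro ext, auto simp: sum_distrib_left algebra_simps)

lemma mat_app_add: "mat_app M (\<lambda>k. x k + y k) = (\<lambda>i. mat_app M x i + mat_app M y i)"
  unfolding mat_app_def by (intro ext, auto simp: algebra_simps sum.distrib)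

lemma mat_app_diff: "mat_app M (\<lambda>k. x k - y k) = (\<lambda>i. mat_app M x i - mat_app M y i)"
  unfolding mat_app_def by (intro ext, auto simp: algebra_simps sum_subtractf)

lemma mat_app_minus_mat:
  assumes "M \<in> carrier_mat p q" "N \<in> carrier_mat p q"
  shows "mat_app (M - N) x = (\<lambda>i. mat_app M x i - mat_app N x i)"
  using assms unfolding mat_app_def by (intro ext, auto simp: algebra_simps sum_subtractf)

lemma cnorm_mat_app_le:
  assumes M: "M \<in> carrier_mat p q" and c: "0 \<le> c" "\<And>i k. i < p \<Longrightarrow> k < q \<Longrightarrow> cmod (M $$ (i,k)) \<le> c"
  shows "cnorm p (mat_app M x) \<le> c * sqrt (real p * real q) * cnorm q x"
proof -
  have row: "cmod (mat_app M x i) \<le> sqrt (real q) * c * cnorm q x" if i: "i < p" for i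
  proof -
    have "cmod (mat_app M x i) \<le> (\<Sum>k<q. cmod (M $$ (i,k)) * cmod (x k))"
      using M i unfolding mat_app_def by (simp add: norm_sum[THEN order_trans] norm_mult)
    also have "\<dots> \<le> (\<Sum>k<q. \<bar>c\<bar> * \<bar>cmod (x k)\<bar>)"
      using c i by (intro sum_mono) (auto intro!: mult_right_mono)
    also have "\<dots> \<le> L2_set (\<lambda>k. c) {..<q} * cnorm q x"
      unfolding cnorm_def by (rule L2_set_mult_ineq)
    finally show ?thesis using c by (simp add: L2_set_constant)
  qed
  have "cnorm p (mat_app M x) \<le> L2_set (\<lambda>i. sqrt (real q) * c * cnorm q x) {..<p}"
    unfolding cnorm_def[of p "mat_app M x"] using row by (intro L2_set_mono) auto
  also have "\<dots> = c * sqrt (real p * real q) * cnorm q x"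
    using c by (simp add: L2_set_constant real_sqrt_mult)
  finally show ?thesis .
qed

lemma ctrans_mult_index_cinner:
  assumes "M \<in> carrier_mat n p" and "N \<in> carrier_mat n q" and "i < p" and "j < q"
  shows "(ctrans M * N) $$ (i,j) = cinner n (col_fn M i) (col_fn N j)"
  using assms unfolding cinner_def col_fn_def by (simp add: scalar_prod_def atLeast0LessThan)

lemma unitary_col_fn_orthonormal:
  assumes U: "U \<in> unitary_mat n" shows "orthonormal n n (col_fn U)"
  unfolding orthonormal_def
proof (intro allI impI)
  fix i j assume "i < n" and "j < n"
  moreover have "U \<in> carrier_mat n n" using U unfolding unitary_mat_def by auto
  ultimately have "cinner n (col_fn U i) (col_fn U j) = (ctrans U * U) $$ (i,j)"
    by (simp only: ctrans_mult_index_cinner)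
  with U \<open>i < n\<close> \<open>j < n\<close> show "cinner n (col_fn U i) (col_fn U j) = (if i = j then 1 else 0)"
    unfolding unitary_mat_def by auto
qed

lemma orthonormal_unitary:
  assumes on: "orthonormal n n v" shows "mat_of_col_fns n n v \<in> unitary_mat n"
proof -
  let ?U = "mat_of_col_fns n n v"
  have U: "?U \<in> carrier_mat n n" by simp
  have left: "ctrans ?U * ?U = 1\<^sub>m n"
  proof (rule eq_matI)
    fix i j assume "i < dim_row (1\<^sub>m n)" and "j < dim_col (1\<^sub>m n)"
    hence i: "i < n" and j: "j < n" by auto
    hence "(ctrans ?U * ?U) $$ (i,j) = cinner n (col_fn ?U i) (col_fn ?U j)"
      using U by (simp only: ctrans_mult_index_cinner)
    also have "\<dots> = cinner n (v i) (v j)" using i j by (intro cinner_cong) (auto simp: col_fn_def)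
    also have "\<dots> = 1\<^sub>m n $$ (i,j)" using on i j unfolding orthonormal_def by simp
    finally show "(ctrans ?U * ?U) $$ (i,j) = 1\<^sub>m n $$ (i,j)" .
  qed auto
  moreover have "?U * ctrans ?U = 1\<^sub>m n"
    using mat_mult_left_right_inverse[OF ctrans_carrier_mat[OF U] U left] .
  ultimately show ?thesis unfolding unitary_mat_def by simp
qed

text \<open>Completeness of an orthonormal basis comes from \<open>U U\<^sup>* = 1\<close> for the matrix \<open>U\<close> with columns \<open>v\<^sub>k\<close>,
  a left inverse of a square matrix being a right inverse.\<close>

lemma orthonormal_expansion:
  assumes on: "orthonormal n n v" and i: "i < n"
  shows "z i = (\<Sum>k<n. cinner n (v k) z * v k i)"
proof -
  let ?U = "mat_of_col_fns n n v"
  have "?U * ctrans ?U = 1\<^sub>m n" using orthonormal_unitary[OF on] unfolding unitary_mat_def by auto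
  hence e: "(?U * ctrans ?U) $$ (i,l) = (if i = l then 1 else 0)" if "l < n" for l
    using i that by simp
  have rows: "(\<Sum>k<n. v k i * cnj (v k l)) = (if i = l then 1 else 0)" if l: "l < n" for l
    using e[OF l] i l by (simp add: scalar_prod_def atLeast0LessThan)
  have "(\<Sum>k<n. cinner n (v k) z * v k i) = (\<Sum>k<n. \<Sum>l<n. cnj (v k l) * z l * v k i)"
    unfolding cinner_def by (simp add: sum_distrib_right)
  also have "\<dots> = (\<Sum>l<n. z l * (\<Sum>k<n. v k i * cnj (v k l)))"
    by (subst sum.swap) (simp add: sum_distrib_left algebra_simps)
  also have "\<dots> = z i" using i by (simp add: rows if_distrib cong: if_cong)
  finally show ?thesis by simp
qed

section \<open>Eigenspaces of Hermitian matrices\<close>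

definition in_eigenspace :: "complex mat \<Rightarrow> complex \<Rightarrow> (nat \<Rightarrow> complex) \<Rightarrow> bool" where
  "in_eigenspace H a x \<longleftrightarrow> (\<forall>i<dim_row H. mat_app H x i = a * x i)"

lemma in_eigenspace_zero: "in_eigenspace H a (\<lambda>i. 0)"
  unfolding in_eigenspace_def mat_app_def by simp

lemma in_eigenspace_add:
  "in_eigenspace H a x \<Longrightarrow> in_eigenspace H a y \<Longrightarrow> in_eigenspace H a (\<lambda>i. x i + y i)"
  unfolding in_eigenspace_def by (simp add: mat_app_add algebra_simps)

lemma in_eigenspace_scale: "in_eigenspace H a x \<Longrightarrow> in_eigenspace H a (\<lambda>i. c * x i)"
  unfolding in_eigenspace_def by (simp add: mat_app_scale)

lemma in_eigenspace_cnormalize: "in_eigenspace H a x \<Longrightarrow> in_eigenspace H a (cnormalize n x)"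
  unfolding cnormalize_def by (rule in_eigenspace_scale)

lemma in_eigenspace_sum:
  assumes "finite S" "\<And>j. j \<in> S \<Longrightarrow> in_eigenspace H a (v j)"
  shows "in_eigenspace H a (\<lambda>i. \<Sum>j\<in>S. c j * v j i)"
  using assms unfolding in_eigenspace_def by (simp add: mat_app_sum sum_distrib_left algebra_simps)

lemma cinner_eigen_right:
  assumes H: "H \<in> carrier_mat n n" and e: "in_eigenspace H a x"
  shows "cinner n y (mat_app H x) = a * cinner n y x"
proof -
  have "cinner n y (mat_app H x) = cinner n y (\<lambda>i. a * x i)"
    using e H unfolding in_eigenspace_def by (intro cinner_cong) auto
  thus ?thesis by (simp add: cinner_scale_right)
qed

lemma cinner_eigen_left:
  assumes H: "H \<in> carrier_mat n n" and e: "in_eigenspace H a x"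
  shows "cinner n (mat_app H x) y = cnj a * cinner n x y"
  using cinner_eigen_right[OF H e, of y] cinner_commute[of n "mat_app H x" y] cinner_commute[of n x y]
  by simp

lemma hermitian_cinner:
  assumes "H \<in> carrier_mat n n" and "ctrans H = H"
  shows "cinner n (mat_app H x) y = cinner n x (mat_app H y)"
  using cinner_mat_app_ctrans[OF assms(1)] assms(2) by simp

lemma hermitian_eigenvalue_real:
  assumes H: "H \<in> carrier_mat n n" and herm: "ctrans H = H" and e: "in_eigenspace H a x"
    and x: "cnorm n x \<noteq> 0"
  shows "complex_of_real (Re a) = a"
proof -
  have "cnj a * cinner n x x = cinner n (mat_app H x) x" by (rule cinner_eigen_left[OF H e, symmetric])
  also have "\<dots> = cinner n x (mat_app H x)" by (rule hermitian_cinner[OF H herm])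
  also have "\<dots> = a * cinner n x x" by (rule cinner_eigen_right[OF H e])
  finally have "cnj a * cinner n x x = a * cinner n x x" .
  moreover have "cinner n x x \<noteq> 0" using x by (simp add: cinner_self)
  ultimately have "cnj a = a" by simp
  thus ?thesis by (simp add: complex_eq_iff)
qed

lemma hermitian_eigenspaces_orthogonal:
  assumes H: "H \<in> carrier_mat n n" and herm: "ctrans H = H"
    and ex: "in_eigenspace H a x" and ey: "in_eigenspace H b y" and ab: "a \<noteq> b"
  shows "cinner n x y = 0"
proof (cases "cnorm n x = 0")
  case True
  thus ?thesis unfolding cinner_def cnorm_eq_0_iff by simp
next
  case False
  have "cnj a * cinner n x y = cinner n (mat_app H x) y" by (rule cinner_eigen_left[OF H ex, symmetric])
  also have "\<dots> = cinner n x (mat_app H y)" by (rule hermitian_cinner[OF H herm])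
  also have "\<dots> = b * cinner n x y" by (rule cinner_eigen_right[OF H ey])
  finally have "cnj a * cinner n x y = b * cinner n x y" .
  moreover have "cnj a = a"
    using hermitian_eigenvalue_real[OF H herm ex False] complex_cnj_complex_of_real[of "Re a"] by simp
  ultimately show ?thesis using ab by simp
qed

lemma complex_mat_eigenvector:
  fixes M :: "complex mat"
  assumes M: "M \<in> carrier_mat r r" and r: "0 < r"
  shows "\<exists>a y. (\<exists>b<r. y b \<noteq> 0) \<and> (\<forall>c<r. (\<Sum>b<r. M $$ (c,b) * y b) = a * y c)"
proof -
  obtain as where cp: "char_poly M = (\<Prod>a\<leftarrow>as. [:- a, 1:])" using char_poly_factorized[OF M] by auto
  have "degree (char_poly M) = r" using degree_monic_char_poly[OF M] by simp
  with cp r obtain a0 as' where "as = a0 # as'" by (cases as) auto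
  hence "poly (char_poly M) a0 = 0" unfolding cp by simp
  hence "eigenvalue M a0" using eigenvalue_root_char_poly[OF M] by simp
  then obtain yv where yv: "yv \<in> carrier_vec r" "yv \<noteq> 0\<^sub>v r" "M *\<^sub>v yv = a0 \<cdot>\<^sub>v yv"
    unfolding eigenvalue_def eigenvector_def using M by auto
  have "\<exists>b<r. yv $ b \<noteq> 0"
  proof (rule ccontr)
    assume "\<not> ?thesis"
    hence "yv = 0\<^sub>v r" using yv(1) by (intro eq_vecI) auto
    thus False using yv(2) by simp
  qed
  moreover have "(\<Sum>b<r. M $$ (c,b) * yv $ b) = a0 * yv $ c" if c: "c < r" for c
  proof -
    have "(M *\<^sub>v yv) $ c = (\<Sum>b<r. M $$ (c,b) * yv $ b)"
      using M yv(1) c by (simp add: scalar_prod_def atLeast0LessThan)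
    with yv(1,3) c M show ?thesis by simp
  qed
  ultimately show ?thesis by blast
qed

lemma sum_lessThan_add: "(\<Sum>c<(k::nat) + r. f c) = (\<Sum>c<k. f c) + (\<Sum>c<r. f (k + c))"
  by (induction r) (auto simp: add.assoc)

lemma hermitian_orth_complement_invariant:
  assumes H: "H \<in> carrier_mat (k + r) (k + r)" and herm: "ctrans H = H"
    and w: "orthonormal (k + r) (k + r) w" and ev: "\<forall>c<k. in_eigenspace H (lam c) (w c)"
    and b: "b < r" and i: "i < k + r"
  shows "mat_app H (w (k + b)) i = (\<Sum>c<r. cinner (k + r) (w (k + c)) (mat_app H (w (k + b))) * w (k + c) i)"
proof -
  let ?z = "mat_app H (w (k + b))"
  have "cinner (k + r) (w c) ?z = 0" if c: "c < k" for c
  proof -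
    have "cinner (k + r) (w c) ?z = cinner (k + r) (mat_app H (w c)) (w (k + b))"
      by (rule hermitian_cinner[OF H herm, symmetric])
    also have "\<dots> = cnj (lam c) * cinner (k + r) (w c) (w (k + b))"
      using cinner_eigen_left[OF H] ev c by simp
    also have "cinner (k + r) (w c) (w (k + b)) = 0" using w c b unfolding orthonormal_def by auto
    finally show ?thesis by simp
  qed
  thus ?thesis using orthonormal_expansion[OF w i, of ?z] unfolding sum_lessThan_add by simp
qed

lemma in_eigenspace_from_compression:
  assumes H: "H \<in> carrier_mat n n"
    and invariant: "\<And>b i. b < r \<Longrightarrow> i < n \<Longrightarrow> mat_app H (w b) i = (\<Sum>c<r. M $$ (c, b) * w c i)"
    and My: "\<forall>c<r. (\<Sum>b<r. M $$ (c,b) * y b) = a * y c"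
  shows "in_eigenspace H a (\<lambda>i. \<Sum>b<r. y b * w b i)"
  unfolding in_eigenspace_def
proof (intro allI impI)
  fix i assume "i < dim_row H"
  hence i: "i < n" using H by simp
  have "mat_app H (\<lambda>i. \<Sum>b<r. y b * w b i) i = (\<Sum>b<r. y b * (\<Sum>c<r. M $$ (c, b) * w c i))"
    unfolding mat_app_sum[OF finite_lessThan] using invariant i by simp
  also have "\<dots> = (\<Sum>b<r. \<Sum>c<r. M $$ (c, b) * y b * w c i)"
    by (simp add: sum_distrib_left algebra_simps)
  also have "\<dots> = (\<Sum>c<r. (\<Sum>b<r. M $$ (c, b) * y b) * w c i)"
    by (subst sum.swap) (simp add: sum_distrib_right)
  also have "\<dots> = a * (\<Sum>b<r. y b * w b i)" using My by (simp add: sum_distrib_left algebra_simps)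
  finally show "mat_app H (\<lambda>i. \<Sum>b<r. y b * w b i) i = a * (\<Sum>b<r. y b * w b i)" .
qed

text \<open>The orthogonal complement of the given eigenvectors is invariant, so an eigenvector of the
  compression of \<open>H\<close> to it is an eigenvector of \<open>H\<close>.\<close>

lemma hermitian_eigenvector_orth:
  assumes H: "H \<in> carrier_mat n n" and herm: "ctrans H = H"
    and on: "orthonormal n k v" and ev: "\<forall>i<k. in_eigenspace H (lam i) (v i)" and kn: "k < n"
  shows "\<exists>x a. cnorm n x = 1 \<and> (\<forall>i<k. cinner n (v i) x = 0) \<and> in_eigenspace H a x"
proof -
  obtain w where w: "orthonormal n n w" and wv: "\<forall>i<k. w i = v i"
    using orthonormal_complete[OF on] kn by auto
  define r where "r = n - k"
  have nkr: "n = k + r" and r: "0 < r" using kn unfolding r_def by simp_all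
  define M where "M = mat r r (\<lambda>(a,b). cinner n (w (k+a)) (mat_app H (w (k+b))))"
  obtain a y where y: "\<exists>b<r. y b \<noteq> 0" and My: "\<forall>c<r. (\<Sum>b<r. M $$ (c,b) * y b) = a * y c"
    using complex_mat_eigenvector[of M r] r unfolding M_def by auto
  have invariant: "mat_app H (w (k + b)) i = (\<Sum>c<r. M $$ (c, b) * w (k + c) i)" if "b < r" "i < n" for b i
    using hermitian_orth_complement_invariant[of H k r w lam b i] H herm w ev wv that
    unfolding nkr M_def by simp
  define x where "x = (\<lambda>i. \<Sum>b<r. y b * w (k + b) i)"
  have eig: "in_eigenspace H a x"
    unfolding x_def by (rule in_eigenspace_from_compression[OF H invariant My])
  have cinner_x: "cinner n (w j) x = (if j \<in> (+) k ` {..<r} then y (j - k) else 0)" if j: "j < n" for j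
  proof -
    have "x = (\<lambda>i. \<Sum>c\<in>(+) k ` {..<r}. y (c - k) * w c i)"
      unfolding x_def by (intro ext, subst sum.reindex) (auto simp: inj_on_def)
    moreover have "(+) k ` {..<r} \<subseteq> {..<n}" using nkr by auto
    ultimately show ?thesis using cinner_orthonormal_sum[OF w j, of "(+) k ` {..<r}" "\<lambda>c. y (c - k)"] by auto
  qed
  have orth: "\<forall>i<k. cinner n (v i) x = 0"
  proof (intro allI impI)
    fix i assume "i < k"
    with cinner_x[of i] kn wv show "cinner n (v i) x = 0" by auto
  qed
  have nz: "cnorm n x \<noteq> 0"
  proof
    assume "cnorm n x = 0"
    hence "cinner n (w (k + b)) x = 0" for b unfolding cinner_def cnorm_eq_0_iff by simp
    moreover obtain b where "b < r" "y b \<noteq> 0" using y by blast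
    ultimately show False using cinner_x[of "k + b"] nkr by simp
  qed
  with orth eig show ?thesis
    by (intro exI[of _ "cnormalize n x"] exI[of _ a])
      (simp add: cnorm_cnormalize cinner_cnormalize_right in_eigenspace_cnormalize)
qed

theorem hermitian_spectral_basis:
  assumes H: "H \<in> carrier_mat n n" and herm: "ctrans H = H"
  shows "\<exists>v lam. orthonormal n n v \<and> (\<forall>k<n. in_eigenspace H (complex_of_real (lam k)) (v k))"
proof -
  have "\<exists>v lam. orthonormal n k v \<and> (\<forall>j<k. in_eigenspace H (lam j) (v j))" if "k \<le> n" for k
    using that
  proof (induction k)
    case 0
    thus ?case by (auto simp: orthonormal_def)
  next
    case (Suc k)
    then obtain v lam where on: "orthonormal n k v" and ev: "\<forall>j<k. in_eigenspace H (lam j) (v j)"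
      by auto
    obtain x a where x: "cnorm n x = 1" "\<forall>i<k. cinner n (v i) x = 0" "in_eigenspace H a x"
      using hermitian_eigenvector_orth[OF H herm on ev] Suc.prems by auto
    define v' where "v' = v(k := x)"
    define lam' where "lam' = lam(k := a)"
    have "orthonormal n (Suc k) v'" unfolding v'_def by (rule orthonormal_extend[OF on x(1,2)])
    moreover have "\<forall>j<Suc k. in_eigenspace H (lam' j) (v' j)"
      using ev x(3) unfolding v'_def lam'_def by (auto simp: less_Suc_eq)
    ultimately show ?case by blast
  qed
  then obtain v lam where on: "orthonormal n n v" and ev: "\<forall>j<n. in_eigenspace H (lam j) (v j)"
    by blast
  have "complex_of_real (Re (lam j)) = lam j" if "j < n" for j
    using hermitian_eigenvalue_real[OF H herm] ev orthonormal_cnorm[OF on] that by fastforce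
  thus ?thesis using on ev by (intro exI[of _ v] exI[of _ "\<lambda>j. Re (lam j)"]) auto
qed

section \<open>Spectral bases\<close>

locale spectral_basis =
  fixes H :: "complex mat" and n :: nat and v :: "nat \<Rightarrow> nat \<Rightarrow> complex" and lam :: "nat \<Rightarrow> real"
  assumes carrier: "H \<in> carrier_mat n n" and orthonormal: "orthonormal n n v"
    and eigen: "\<And>k. k < n \<Longrightarrow> in_eigenspace H (complex_of_real (lam k)) (v k)"
begin

lemma expansion: "i < n \<Longrightarrow> x i = (\<Sum>k<n. cinner n (v k) x * v k i)"
  by (rule orthonormal_expansion[OF orthonormal])

lemma cnorm_sq_coeffs: "(cnorm n x)\<^sup>2 = (\<Sum>k<n. (cmod (cinner n (v k) x))\<^sup>2)"
  using cnorm_cong[of n x "\<lambda>i. \<Sum>k<n. cinner n (v k) x * v k i"] expansion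
    cnorm_orthonormal_sum[OF orthonormal, of "{..<n}"] by simp

lemma residual_expansion:
  assumes i: "i < n"
  shows "mat_app H x i - complex_of_real t * x i
    = (\<Sum>k<n. (cinner n (v k) x * complex_of_real (lam k - t)) * v k i)"
proof -
  have "mat_app H x = mat_app H (\<lambda>j. \<Sum>k<n. cinner n (v k) x * v k j)"
    using carrier by (intro mat_app_cong) (auto intro: expansion)
  hence "mat_app H x i = (\<Sum>k<n. cinner n (v k) x * mat_app H (v k) i)"
    unfolding mat_app_sum[OF finite_lessThan] by simp
  also have "\<dots> = (\<Sum>k<n. cinner n (v k) x * (complex_of_real (lam k) * v k i))"
    using eigen i carrier unfolding in_eigenspace_def by (intro sum.cong) auto
  finally show ?thesis
    by (subst expansion[OF i]) (simp add: sum_distrib_left sum_subtractf[symmetric] algebra_simps)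
qed

lemma residual_cnorm_sq:
  "(cnorm n (\<lambda>i. mat_app H x i - complex_of_real t * x i))\<^sup>2
    = (\<Sum>k<n. (cmod (cinner n (v k) x))\<^sup>2 * (lam k - t)\<^sup>2)"
proof -
  have "cnorm n (\<lambda>i. mat_app H x i - complex_of_real t * x i)
      = cnorm n (\<lambda>i. \<Sum>k<n. (cinner n (v k) x * complex_of_real (lam k - t)) * v k i)"
    by (rule cnorm_cong, rule residual_expansion)
  thus ?thesis
    using cnorm_orthonormal_sum[OF orthonormal, of "{..<n}"]
    by (simp add: norm_mult power_mult_distrib of_real_diff[symmetric] del: of_real_diff)
qed

lemma exists_eigenvalue_near:
  assumes x: "cnorm n x = 1"
  shows "\<exists>k<n. \<bar>lam k - t\<bar> \<le> cnorm n (\<lambda>i. mat_app H x i - complex_of_real t * x i)"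
proof -
  have "n \<noteq> 0" using x cnorm_eq_0_iff[of n x] by auto
  define k0 where "k0 = arg_min_on (\<lambda>k. \<bar>lam k - t\<bar>) {..<n}"
  have k0: "k0 < n" using arg_min_if_finite(1)[of "{..<n}"] \<open>n \<noteq> 0\<close> unfolding k0_def by auto
  have min: "\<bar>lam k0 - t\<bar> \<le> \<bar>lam k - t\<bar>" if "k < n" for k
    using arg_min_least[of "{..<n}" k "\<lambda>k. \<bar>lam k - t\<bar>"] that unfolding k0_def by auto
  have "(lam k0 - t)\<^sup>2 = (\<Sum>k<n. (cmod (cinner n (v k) x))\<^sup>2) * (lam k0 - t)\<^sup>2"
    using cnorm_sq_coeffs[of x] x by simp
  also have "\<dots> \<le> (\<Sum>k<n. (cmod (cinner n (v k) x))\<^sup>2 * (lam k - t)\<^sup>2)"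
    unfolding sum_distrib_right using min by (intro sum_mono mult_left_mono) (auto simp: abs_le_square_iff)
  also have "\<dots> = (cnorm n (\<lambda>i. mat_app H x i - complex_of_real t * x i))\<^sup>2"
    by (rule residual_cnorm_sq[symmetric])
  finally have "\<bar>lam k0 - t\<bar>\<^sup>2 \<le> (cnorm n (\<lambda>i. mat_app H x i - complex_of_real t * x i))\<^sup>2"
    by simp
  hence "\<bar>lam k0 - t\<bar> \<le> cnorm n (\<lambda>i. mat_app H x i - complex_of_real t * x i)"
    by (rule power2_le_imp_le) simp
  thus ?thesis using k0 by blast
qed

lemma projection_error_le:
  assumes S: "S \<subseteq> {..<n}" and g: "0 < g" and far: "\<And>k. k < n \<Longrightarrow> k \<notin> S \<Longrightarrow> g \<le> \<bar>lam k - t\<bar>"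
  shows "g * cnorm n (\<lambda>i. x i - (\<Sum>k\<in>S. cinner n (v k) x * v k i))
    \<le> cnorm n (\<lambda>i. mat_app H x i - complex_of_real t * x i)"
proof -
  let ?c = "\<lambda>k. (cmod (cinner n (v k) x))\<^sup>2"
  have far_sq: "g\<^sup>2 \<le> (lam k - t)\<^sup>2" if "k < n" "k \<notin> S" for k
    using power_mono[OF far[OF that], of 2] g by simp
  have "cnorm n (\<lambda>i. x i - (\<Sum>k\<in>S. cinner n (v k) x * v k i))
      = cnorm n (\<lambda>i. \<Sum>k\<in>{..<n} - S. cinner n (v k) x * v k i)"
  proof (rule cnorm_cong)
    fix i assume "i < n"
    thus "x i - (\<Sum>k\<in>S. cinner n (v k) x * v k i) = (\<Sum>k\<in>{..<n} - S. cinner n (v k) x * v k i)"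
      using expansion[of i x] S by (simp add: sum_diff)
  qed
  hence "(cnorm n (\<lambda>i. x i - (\<Sum>k\<in>S. cinner n (v k) x * v k i)))\<^sup>2 = (\<Sum>k\<in>{..<n} - S. ?c k)"
    using cnorm_orthonormal_sum[OF orthonormal, of "{..<n} - S" "\<lambda>k. cinner n (v k) x"] by simp
  hence "(g * cnorm n (\<lambda>i. x i - (\<Sum>k\<in>S. cinner n (v k) x * v k i)))\<^sup>2 = (\<Sum>k\<in>{..<n} - S. ?c k * g\<^sup>2)"
    by (simp add: power_mult_distrib sum_distrib_left mult.commute)
  also have "\<dots> \<le> (\<Sum>k\<in>{..<n} - S. ?c k * (lam k - t)\<^sup>2)"
    using far_sq by (intro sum_mono mult_left_mono) auto
  also have "\<dots> \<le> (\<Sum>k<n. ?c k * (lam k - t)\<^sup>2)" by (rule sum_mono2) auto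
  also have "\<dots> = (cnorm n (\<lambda>i. mat_app H x i - complex_of_real t * x i))\<^sup>2"
    by (rule residual_cnorm_sq[symmetric])
  finally show ?thesis by (rule power2_le_imp_le) simp
qed

lemma projection_in_eigenspace:
  assumes "S \<subseteq> {..<n}" and "\<And>k. k \<in> S \<Longrightarrow> lam k = \<nu>"
  shows "in_eigenspace H (complex_of_real \<nu>) (\<lambda>i. \<Sum>k\<in>S. c k * v k i)"
  using assms eigen by (intro in_eigenspace_sum) (auto intro: finite_subset)

lemma mult_eigenbasis:
  "H * mat_of_col_fns n n v = mat_of_col_fns n n v * mat n n (\<lambda>(i,j). if i = j then complex_of_real (lam i) else 0)"
  (is "H * ?U = ?U * ?L")
proof (rule eq_matI)
  fix i k assume "i < dim_row (?U * ?L)" and "k < dim_col (?U * ?L)"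
  hence i: "i < n" and k: "k < n" by auto
  have "(H * ?U) $$ (i,k) = mat_app H (v k) i"
    using carrier i k by (simp add: mat_app_def scalar_prod_def atLeast0LessThan)
  also have "\<dots> = complex_of_real (lam k) * v k i" using eigen[OF k] i carrier unfolding in_eigenspace_def by auto
  also have "\<dots> = (\<Sum>l<n. ?U $$ (i,l) * ?L $$ (l,k))"
    using i k by (simp add: if_distrib cong: if_cong)
  also have "\<dots> = (?U * ?L) $$ (i,k)" using i k by (simp add: scalar_prod_def atLeast0LessThan)
  finally show "(H * ?U) $$ (i,k) = (?U * ?L) $$ (i,k)" .
qed (use carrier in auto)

lemma char_poly_eq: "char_poly H = (\<Prod>k\<leftarrow>[0..<n]. [:- complex_of_real (lam k), 1:])"
proof -
  let ?U = "mat_of_col_fns n n v" and ?L = "mat n n (\<lambda>(i,j). if i = j then complex_of_real (lam i) else 0)"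
  have U: "?U \<in> unitary_mat n" by (rule orthonormal_unitary[OF orthonormal])
  hence UU: "?U * ctrans ?U = 1\<^sub>m n" "ctrans ?U * ?U = 1\<^sub>m n" unfolding unitary_mat_def by auto
  have cU: "ctrans ?U \<in> carrier_mat n n" using ctrans_carrier_mat[of ?U n n] by simp
  have "H = H * (?U * ctrans ?U)" using UU carrier by simp
  also have "\<dots> = ?U * ?L * ctrans ?U"
    using assoc_mult_mat[OF carrier _ cU, of ?U] mult_eigenbasis by simp
  finally have "similar_mat H ?L"
    unfolding similar_mat_def similar_mat_wit_def Let_def using carrier cU UU
    by (intro exI[of _ ?U] exI[of _ "ctrans ?U"]) auto
  hence "char_poly H = char_poly ?L" by (rule char_poly_similar)
  also have "\<dots> = (\<Prod>k\<leftarrow>[0..<n]. [:- complex_of_real (lam k), 1:])"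
    by (subst char_poly_upper_triangular[of _ n])
      (auto simp: upper_triangular_def diag_mat_def intro!: arg_cong[where f = prod_list] map_cong)
  finally show ?thesis .
qed

lemma eigenvalue_iff: "eigenvalue H z \<longleftrightarrow> (\<exists>k<n. z = complex_of_real (lam k))"
  using eigenvalue_root_char_poly[OF carrier] by (auto simp: char_poly_eq poly_prod_list prod_list_zero_iff)

lemma eigenvalues_eq: "{z. eigenvalue H z} = complex_of_real ` lam ` {..<n}"
  using eigenvalue_iff by auto

end

section \<open>Perturbed Gram--Schmidt orthonormalisation\<close>

definition orthogonal_subspaces :: "nat \<Rightarrow> ('b \<Rightarrow> (nat \<Rightarrow> complex) \<Rightarrow> bool) \<Rightarrow> bool" where
  "orthogonal_subspaces n E \<longleftrightarrow>
     (\<forall>b. E b (\<lambda>i. 0)) \<and>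
     (\<forall>b x y. E b x \<longrightarrow> E b y \<longrightarrow> E b (\<lambda>i. x i + y i)) \<and>
     (\<forall>b a x. E b x \<longrightarrow> E b (\<lambda>i. a * x i)) \<and>
     (\<forall>b b' x y. b \<noteq> b' \<longrightarrow> E b x \<longrightarrow> E b' y \<longrightarrow> cinner n x y = 0)"

lemma orthogonal_subspacesD:
  assumes "orthogonal_subspaces n E"
  shows "E b (\<lambda>i. 0)"
    and "E b x \<Longrightarrow> E b y \<Longrightarrow> E b (\<lambda>i. x i + y i)"
    and "E b x \<Longrightarrow> E b (\<lambda>i. a * x i)"
    and "b \<noteq> b' \<Longrightarrow> E b x \<Longrightarrow> E b' y \<Longrightarrow> cinner n x y = 0"
  using assms unfolding orthogonal_subspaces_def by blast+

lemma orthogonal_subspaces_sum: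
  assumes E: "orthogonal_subspaces n E"
  shows "finite S \<Longrightarrow> (\<And>l. l \<in> S \<Longrightarrow> E b (f l)) \<Longrightarrow> E b (\<lambda>i. \<Sum>l\<in>S. f l i)"
proof (induction S rule: finite_induct)
  case empty
  thus ?case using orthogonal_subspacesD(1)[OF E] by simp
next
  case (insert a S)
  hence "E b (\<lambda>i. f a i + (\<Sum>l\<in>S. f l i))" using orthogonal_subspacesD(2)[OF E] by simp
  thus ?case using insert by simp
qed

lemma orthogonal_subspaces_diff:
  assumes E: "orthogonal_subspaces n E" and "E b x" "E b y"
  shows "E b (\<lambda>i. x i - y i)"
proof -
  have "E b (\<lambda>i. x i + (- 1) * y i)" using assms orthogonal_subspacesD[OF E] by blast
  thus ?thesis by simp
qed

lemma hermitian_eigenspaces_orthogonal_subspaces: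
  assumes "H \<in> carrier_mat n n" and "ctrans H = H"
  shows "orthogonal_subspaces n (in_eigenspace H)"
  unfolding orthogonal_subspaces_def
  using in_eigenspace_zero in_eigenspace_add in_eigenspace_scale hermitian_eigenspaces_orthogonal[OF assms]
  by blast

lemma orth_residual_orthogonal_subspace:
  assumes E: "orthogonal_subspaces n E" and q: "\<forall>l<N. E (c l) (q l)" and x: "E b x"
  shows "E b (orth_residual n N q x)"
proof -
  have "E b (\<lambda>i. cinner n (q l) x * q l i)" if "l < N" for l
  proof (cases "c l = b")
    case True
    thus ?thesis using orthogonal_subspacesD(3)[OF E] q x that by blast
  next
    case False
    hence "cinner n (q l) x = 0" using orthogonal_subspacesD(4)[OF E] q x that by blast
    thus ?thesis using orthogonal_subspacesD(1)[OF E] by simp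
  qed
  hence "E b (\<lambda>i. \<Sum>l<N. cinner n (q l) x * q l i)" by (intro orthogonal_subspaces_sum[OF E]) auto
  thus ?thesis unfolding orth_residual_def using orthogonal_subspaces_diff[OF E x] by blast
qed

lemma orth_residual_eq_self:
  assumes "\<forall>l<N. cinner n (q l) x = 0"
  shows "orth_residual n N q x = x"
  using assms unfolding orth_residual_def by simp

text \<open>Each Gram--Schmidt coefficient \<open>\<langle>q\<^sub>l, x\<rangle>\<close> is \<open>O(\<eta>)\<close> because \<open>\<langle>u\<^sub>l, u\<^sub>N\<rangle> = 0\<close>.\<close>

lemma orth_residual_close:
  assumes u: "orthonormal n (Suc N) u" and q: "orthonormal n N q"
    and qu: "\<forall>l<N. cnorm n (\<lambda>i. q l i - u l i) \<le> C * \<eta>" and xu: "cnorm n (\<lambda>i. x i - u N i) \<le> \<eta>"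
    and C: "0 \<le> C" and \<eta>: "0 \<le> \<eta>" "\<eta> \<le> 1"
  shows "cnorm n (\<lambda>i. orth_residual n N q x i - u N i) \<le> \<eta> * (1 + real N * (2 * C + 1))"
proof -
  have x2: "cnorm n x \<le> 2"
    using cnorm_le_add_diff[of n x "u N"] orthonormal_cnorm[OF u] xu \<eta> by simp
  have coeff: "cmod (cinner n (q l) x) \<le> 2 * C * \<eta> + \<eta>" if l: "l < N" for l
  proof -
    have "cinner n (u l) (u N) = 0" using u l unfolding orthonormal_def by auto
    hence "cinner n (q l) x = cinner n (\<lambda>i. q l i - u l i) x + cinner n (u l) (\<lambda>i. x i - u N i)"
      by (simp add: cinner_diff_left cinner_diff_right)
    hence "cmod (cinner n (q l) x)
        \<le> cmod (cinner n (\<lambda>i. q l i - u l i) x) + cmod (cinner n (u l) (\<lambda>i. x i - u N i))"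
      by (simp add: norm_triangle_ineq)
    also have "\<dots> \<le> cnorm n (\<lambda>i. q l i - u l i) * cnorm n x + cnorm n (u l) * cnorm n (\<lambda>i. x i - u N i)"
      by (intro add_mono cinner_Cauchy_Schwarz)
    also have "\<dots> \<le> (C * \<eta>) * 2 + 1 * \<eta>"
      using qu l x2 xu orthonormal_cnorm[OF u, of l] C \<eta> by (intro add_mono mult_mono) auto
    finally show ?thesis by simp
  qed
  have "cnorm n (\<lambda>i. orth_residual n N q x i - u N i)
      = cnorm n (\<lambda>i. (x i - u N i) - (\<Sum>l<N. cinner n (q l) x * q l i))"
    unfolding orth_residual_def by (rule cnorm_cong) simp
  also have "\<dots> \<le> cnorm n (\<lambda>i. x i - u N i) + cnorm n (\<lambda>i. \<Sum>l<N. cinner n (q l) x * q l i)"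
    by (rule cnorm_diff_le)
  also have "\<dots> \<le> \<eta> + (\<Sum>l<N. cnorm n (\<lambda>i. cinner n (q l) x * q l i))"
    using xu cnorm_sum_le[of "{..<N}" n] by (intro add_mono) auto
  also have "\<dots> \<le> \<eta> + (\<Sum>l<N. 2 * C * \<eta> + \<eta>)"
    using coeff orthonormal_cnorm[OF q] by (intro add_mono sum_mono) (auto simp: cnorm_scale)
  finally show ?thesis by (simp add: algebra_simps)
qed

text \<open>The earlier vectors keep their bound and the new one is within twice the bound of
  \<open>orth_residual_close\<close>, as normalising at most doubles the distance (\<open>cnormalize_close\<close>).\<close>

fun gs_const :: "nat \<Rightarrow> real" where
  "gs_const 0 = 1"
| "gs_const (Suc N) = gs_const N + 2 * (1 + real N * (2 * gs_const N + 1))"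

lemma gs_const_ge_1: "1 \<le> gs_const N"
  by (induction N) (auto intro: add_increasing2)

lemma gram_schmidt_step:
  assumes E: "orthogonal_subspaces n E" and u: "orthonormal n (Suc N) u"
    and \<eta>: "0 \<le> \<eta>" "gs_const (Suc N) * \<eta> \<le> 1"
    and w: "cnorm n (\<lambda>i. w i - u N i) \<le> \<eta>" "E b w"
    and q: "orthonormal n N q" "\<forall>l<N. E (c l) (q l)" "\<forall>l<N. cnorm n (\<lambda>i. q l i - u l i) \<le> gs_const N * \<eta>"
  shows "cnorm n (cnormalize n (orth_residual n N q w)) = 1"
    and "\<forall>l<N. cinner n (q l) (cnormalize n (orth_residual n N q w)) = 0"
    and "E b (cnormalize n (orth_residual n N q w))"
    and "cnorm n (\<lambda>i. cnormalize n (orth_residual n N q w) i - u N i) \<le> gs_const (Suc N) * \<eta>"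
proof -
  let ?C = "gs_const N" and ?z = "orth_residual n N q w"
  have C: "0 \<le> ?C" using gs_const_ge_1[of N] by simp
  have "\<eta> \<le> gs_const (Suc N) * \<eta>" using gs_const_ge_1[of "Suc N"] \<eta>(1) by (simp add: mult_le_cancel_right1)
  hence "\<eta> \<le> 1" using \<eta>(2) by linarith
  have close: "cnorm n (\<lambda>i. ?z i - u N i) \<le> \<eta> * (1 + real N * (2 * ?C + 1))"
    by (rule orth_residual_close[OF u q(1) q(3) w(1) C \<eta>(1) \<open>\<eta> \<le> 1\<close>])
  have bound: "2 * (\<eta> * (1 + real N * (2 * ?C + 1))) \<le> gs_const (Suc N) * \<eta>"
    using C \<eta>(1) by (simp add: algebra_simps)
  note normalized = cnormalize_close[OF orthonormal_cnorm[OF u, of N] close]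
  show "cnorm n (cnormalize n ?z) = 1" using normalized(1) bound \<eta>(2) by (simp add: cnorm_cnormalize)
  show "\<forall>l<N. cinner n (q l) (cnormalize n ?z) = 0"
    using q(1) by (simp add: cinner_cnormalize_right cinner_orth_residual)
  show "E b (cnormalize n ?z)"
    using orth_residual_orthogonal_subspace[OF E q(2) w(2)]
    unfolding cnormalize_def by (rule orthogonal_subspacesD(3)[OF E])
  show "cnorm n (\<lambda>i. cnormalize n ?z i - u N i) \<le> gs_const (Suc N) * \<eta>"
    using normalized(2) bound \<eta>(2) by simp
qed

theorem perturbed_gram_schmidt:
  assumes E: "orthogonal_subspaces n E" and u: "orthonormal n N u"
    and \<eta>: "0 \<le> \<eta>" "gs_const N * \<eta> \<le> 1"
    and wu: "\<forall>j<N. cnorm n (\<lambda>i. w j i - u j i) \<le> \<eta>" and wE: "\<forall>j<N. E (c j) (w j)"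
  shows "\<exists>q. orthonormal n N q \<and> (\<forall>j<N. E (c j) (q j)) \<and>
    (\<forall>j<N. cnorm n (\<lambda>i. q j i - u j i) \<le> gs_const N * \<eta>) \<and>
    (\<forall>k\<le>N. orthonormal n k w \<longrightarrow> (\<forall>j<k. q j = w j))"
  using u \<eta> wu wE
proof (induction N)
  case 0
  thus ?case by (auto simp: orthonormal_def)
next
  case (Suc N)
  have mono: "gs_const N * \<eta> \<le> gs_const (Suc N) * \<eta>"
    using Suc.prems(2) gs_const_ge_1[of N] by (intro mult_right_mono) auto
  with Suc.prems obtain q where q: "orthonormal n N q" "\<forall>j<N. E (c j) (q j)"
    "\<forall>j<N. cnorm n (\<lambda>i. q j i - u j i) \<le> gs_const N * \<eta>"
    and q_prefix: "\<forall>k\<le>N. orthonormal n k w \<longrightarrow> (\<forall>j<k. q j = w j)"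
    using Suc.IH orthonormal_mono[OF Suc.prems(1)] by fastforce
  let ?x = "cnormalize n (orth_residual n N q (w N))"
  note step = gram_schmidt_step[OF E Suc.prems(1,2,3) _ _ q, of "w N" "c N"]
  define q' where "q' = q(N := ?x)"
  have "orthonormal n (Suc N) q'"
    unfolding q'_def using Suc.prems(4,5) step(1,2) by (intro orthonormal_extend[OF q(1)]) auto
  moreover have "\<forall>j<Suc N. E (c j) (q' j)"
    unfolding q'_def using q(2) step(3) Suc.prems(4,5) by (auto simp: less_Suc_eq)
  moreover have "\<forall>j<Suc N. cnorm n (\<lambda>i. q' j i - u j i) \<le> gs_const (Suc N) * \<eta>"
    unfolding q'_def using q(3) step(4) mono Suc.prems(4,5) by (auto simp: less_Suc_eq)
  moreover have "\<forall>j<k. q' j = w j" if k: "k \<le> Suc N" and w: "orthonormal n k w" for k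
  proof (cases "k \<le> N")
    case True
    thus ?thesis using q_prefix w unfolding q'_def by auto
  next
    case False
    hence k: "k = Suc N" using k by simp
    have qw: "\<forall>j<N. q j = w j" using q_prefix orthonormal_mono[OF w] k by auto
    have "orth_residual n N q (w N) = w N"
      using qw w k by (intro orth_residual_eq_self) (auto simp: orthonormal_def)
    hence "?x = w N"
      using orthonormal_cnorm[OF w, of N] k unfolding cnormalize_def by simp
    thus ?thesis using qw k unfolding q'_def by (auto simp: less_Suc_eq)
  qed
  ultimately show ?case by blast
qed

section \<open>Perturbation of eigenbases\<close>

text \<open>The values of \<open>\<mu>\<close> are \<open>g\<close>-separated and each is \<open>\<kappa>\<close>-close to a value of \<open>lam\<close>; choosing
  such a value gives an injection from the values of \<open>\<mu>\<close> to those of \<open>lam\<close>, which the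
  cardinality bound forces to be onto.\<close>

lemma matching_values:
  fixes \<mu> lam :: "nat \<Rightarrow> real"
  assumes g: "0 < g" and \<kappa>: "0 \<le> \<kappa>" "\<kappa> \<le> g / 4"
    and gap: "\<forall>i<n. \<forall>j<n. \<mu> i \<noteq> \<mu> j \<longrightarrow> g \<le> \<bar>\<mu> i - \<mu> j\<bar>"
    and near: "\<forall>j<n. \<exists>k<n. \<bar>lam k - \<mu> j\<bar> \<le> \<kappa>"
    and card: "card (lam ` {..<n}) \<le> card (\<mu> ` {..<n})"
  shows "card (lam ` {..<n}) = card (\<mu> ` {..<n})"
    and "\<lbrakk>j < n; k < n; k' < n; \<bar>lam k - \<mu> j\<bar> \<le> \<kappa>; \<bar>lam k' - \<mu> j\<bar> \<le> \<kappa>\<rbrakk> \<Longrightarrow> lam k = lam k'"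
proof -
  let ?M = "\<mu> ` {..<n}" and ?L = "lam ` {..<n}"
  define \<psi> where "\<psi> x = (SOME y. y \<in> ?L \<and> \<bar>y - x\<bar> \<le> \<kappa>)" for x
  have \<psi>: "\<psi> x \<in> ?L \<and> \<bar>\<psi> x - x\<bar> \<le> \<kappa>" if "x \<in> ?M" for x
  proof -
    from that near obtain k where "k < n" "\<bar>lam k - x\<bar> \<le> \<kappa>" by auto
    hence "\<exists>y. y \<in> ?L \<and> \<bar>y - x\<bar> \<le> \<kappa>" by auto
    thus ?thesis unfolding \<psi>_def by (rule someI_ex)
  qed
  have close_eq: "x = x'"
    if x: "x \<in> ?M" "x' \<in> ?M" and y: "\<bar>y - x\<bar> \<le> \<kappa>" "\<bar>y - x'\<bar> \<le> \<kappa>" for x x' y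
  proof (rule ccontr)
    assume "x \<noteq> x'"
    hence "g \<le> \<bar>x - x'\<bar>" using gap x by auto
    thus False using y g \<kappa> by linarith
  qed
  have "inj_on \<psi> ?M"
  proof (rule inj_onI)
    fix x x' assume x: "x \<in> ?M" "x' \<in> ?M" and eq: "\<psi> x = \<psi> x'"
    have "\<bar>\<psi> x - x\<bar> \<le> \<kappa>" "\<bar>\<psi> x - x'\<bar> \<le> \<kappa>" using \<psi>[OF x(1)] \<psi>[OF x(2)] eq by auto
    thus "x = x'" by (rule close_eq[OF x])
  qed
  hence card_\<psi>: "card (\<psi> ` ?M) = card ?M" by (rule card_image)
  have sub: "\<psi> ` ?M \<subseteq> ?L" using \<psi> by auto
  hence "card ?M \<le> card ?L" using card_\<psi> card_mono[OF _ sub] by simp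
  thus c: "card ?L = card ?M" using card by simp
  have onto: "\<psi> ` ?M = ?L" using card_subset_eq[OF _ sub] c card_\<psi> by simp
  have lam_eq: "lam k = \<psi> (\<mu> j)" if j: "j < n" and k: "k < n" and c: "\<bar>lam k - \<mu> j\<bar> \<le> \<kappa>" for j k
  proof -
    have "lam k \<in> \<psi> ` ?M" using onto k by simp
    then obtain x where x: "x \<in> ?M" "lam k = \<psi> x" by blast
    hence "x = \<mu> j" using close_eq[of x "\<mu> j" "lam k"] \<psi>[OF x(1)] j c by auto
    thus ?thesis using x by simp
  qed
  show "\<lbrakk>j < n; k < n; k' < n; \<bar>lam k - \<mu> j\<bar> \<le> \<kappa>; \<bar>lam k' - \<mu> j\<bar> \<le> \<kappa>\<rbrakk> \<Longrightarrow> lam k = lam k'"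
    using lam_eq[of j k] lam_eq[of j k'] by simp
qed

lemma cluster_representatives:
  fixes \<mu> lam :: "nat \<Rightarrow> real"
  assumes g: "0 < g" and \<kappa>: "0 \<le> \<kappa>" "\<kappa> \<le> g / 4"
    and gap: "\<forall>i<n. \<forall>j<n. \<mu> i \<noteq> \<mu> j \<longrightarrow> g \<le> \<bar>\<mu> i - \<mu> j\<bar>"
    and near_lam: "\<forall>k<n. \<exists>j<n. \<bar>lam k - \<mu> j\<bar> \<le> \<kappa>" and near_\<mu>: "\<forall>j<n. \<exists>k<n. \<bar>lam k - \<mu> j\<bar> \<le> \<kappa>"
    and card: "card (lam ` {..<n}) \<le> card (\<mu> ` {..<n})"
  shows "\<exists>\<nu>. \<forall>j<n. (\<exists>k<n. lam k = \<nu> j) \<and> \<bar>\<nu> j - \<mu> j\<bar> \<le> \<kappa> \<and>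
    (\<forall>k<n. lam k \<noteq> \<nu> j \<longrightarrow> g / 2 \<le> \<bar>lam k - \<mu> j\<bar>)"
proof -
  define \<nu> where "\<nu> j = lam (SOME k. k < n \<and> \<bar>lam k - \<mu> j\<bar> \<le> \<kappa>)" for j
  have \<nu>: "\<exists>k<n. \<nu> j = lam k \<and> \<bar>lam k - \<mu> j\<bar> \<le> \<kappa>" if "j < n" for j
    using someI_ex[OF near_\<mu>[rule_format, OF that]] unfolding \<nu>_def by blast
  have "g / 2 \<le> \<bar>lam k - \<mu> j\<bar>" if j: "j < n" and k: "k < n" and ne: "lam k \<noteq> \<nu> j" for j k
  proof -
    obtain i where i: "i < n" "\<bar>lam k - \<mu> i\<bar> \<le> \<kappa>" using near_lam k by blast
    have "\<mu> i \<noteq> \<mu> j" using matching_values(2)[OF g \<kappa> gap near_\<mu> card j k] \<nu>[OF j] i ne by force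
    hence "g \<le> \<bar>\<mu> i - \<mu> j\<bar>" using gap i j by blast
    thus ?thesis using i \<kappa> by linarith
  qed
  with \<nu> show ?thesis by (intro exI[of _ \<nu>]) force
qed

lemma spectral_bases_eigenvalues_close:
  assumes H: "spectral_basis H n u \<mu>" and H': "spectral_basis H' n v lam"
    and close: "\<And>x. cnorm n (\<lambda>i. mat_app H' x i - mat_app H x i) \<le> \<kappa> * cnorm n x"
  shows "\<forall>k<n. \<exists>j<n. \<bar>lam k - \<mu> j\<bar> \<le> \<kappa>" and "\<forall>j<n. \<exists>k<n. \<bar>lam k - \<mu> j\<bar> \<le> \<kappa>"
proof (intro allI impI)
  fix k assume k: "k < n"
  have v1: "cnorm n (v k) = 1" using spectral_basis.orthonormal[OF H'] k by (rule orthonormal_cnorm)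
  have "cnorm n (\<lambda>i. mat_app H (v k) i - complex_of_real (lam k) * v k i)
      = cnorm n (\<lambda>i. mat_app H' (v k) i - mat_app H (v k) i)"
    using spectral_basis.eigen[OF H' k] spectral_basis.carrier[OF H']
    by (subst cnorm_minus_commute) (intro cnorm_cong, auto simp: in_eigenspace_def)
  also have "\<dots> \<le> \<kappa>" using close[of "v k"] v1 by simp
  finally show "\<exists>j<n. \<bar>lam k - \<mu> j\<bar> \<le> \<kappa>"
    using spectral_basis.exists_eigenvalue_near[OF H v1, of "lam k"] by (force simp: abs_minus_commute)
next
  show "\<forall>j<n. \<exists>k<n. \<bar>lam k - \<mu> j\<bar> \<le> \<kappa>"
  proof (intro allI impI)
    fix j assume j: "j < n"
    have u1: "cnorm n (u j) = 1" using spectral_basis.orthonormal[OF H] j by (rule orthonormal_cnorm)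
    have "cnorm n (\<lambda>i. mat_app H' (u j) i - complex_of_real (\<mu> j) * u j i)
        = cnorm n (\<lambda>i. mat_app H' (u j) i - mat_app H (u j) i)"
      using spectral_basis.eigen[OF H j] spectral_basis.carrier[OF H]
      by (intro cnorm_cong) (auto simp: in_eigenspace_def)
    also have "\<dots> \<le> \<kappa>" using close[of "u j"] u1 by simp
    finally show "\<exists>k<n. \<bar>lam k - \<mu> j\<bar> \<le> \<kappa>"
      using spectral_basis.exists_eigenvalue_near[OF H' u1, of "\<mu> j"] by force
  qed
qed

context spectral_basis
begin

lemma eigenspace_projection_close:
  assumes g: "0 < g" and far: "\<And>k. k < n \<Longrightarrow> lam k \<noteq> \<nu> \<Longrightarrow> g \<le> \<bar>lam k - t\<bar>"
    and res: "cnorm n (\<lambda>i. mat_app H x i - complex_of_real t * x i) \<le> \<kappa>"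
  shows "in_eigenspace H (complex_of_real \<nu>) (\<lambda>i. \<Sum>k | k < n \<and> lam k = \<nu>. cinner n (v k) x * v k i)"
    and "cnorm n (\<lambda>i. (\<Sum>k | k < n \<and> lam k = \<nu>. cinner n (v k) x * v k i) - x i) \<le> \<kappa> / g"
proof -
  let ?w = "\<lambda>i. \<Sum>k | k < n \<and> lam k = \<nu>. cinner n (v k) x * v k i"
  show "in_eigenspace H (complex_of_real \<nu>) ?w" by (rule projection_in_eigenspace) auto
  have "g * cnorm n (\<lambda>i. x i - ?w i) \<le> \<kappa>"
    using projection_error_le[of "{k. k < n \<and> lam k = \<nu>}" g t x] far g res by force
  thus "cnorm n (\<lambda>i. ?w i - x i) \<le> \<kappa> / g"
    using g cnorm_minus_commute[of n ?w x] by (simp add: pos_le_divide_eq mult.commute)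
qed

text \<open>The cardinality hypothesis keeps the eigenvalue clusters of \<open>H\<close> from splitting; projecting
  the eigenbasis of \<open>H\<close> onto the matching eigenspaces of \<open>H'\<close> and re-orthonormalising
  within these eigenspaces gives the new basis.\<close>

lemma perturbed_eigenbasis:
  assumes H': "H' \<in> carrier_mat n n" "ctrans H' = H'"
    and close: "\<And>x. cnorm n (\<lambda>i. mat_app H' x i - mat_app H x i) \<le> \<kappa> * cnorm n x"
    and gap: "0 < g" "\<forall>i<n. \<forall>j<n. lam i \<noteq> lam j \<longrightarrow> g \<le> \<bar>lam i - lam j\<bar>"
    and \<kappa>: "0 \<le> \<kappa>" "\<kappa> \<le> g / 4" "gs_const n * (2 * \<kappa> / g) \<le> 1"
    and card: "card {z. eigenvalue H' z} \<le> card (lam ` {..<n})"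
  shows "card {z. eigenvalue H' z} = card (lam ` {..<n})"
    and "\<And>z. eigenvalue H' z \<Longrightarrow> \<exists>j<n. cmod (z - complex_of_real (lam j)) \<le> \<kappa>"
    and "\<exists>q \<nu>. orthonormal n n q \<and> (\<forall>j<n. in_eigenspace H' (complex_of_real (\<nu> j)) (q j) \<and>
           \<bar>\<nu> j - lam j\<bar> \<le> \<kappa> \<and> cnorm n (\<lambda>i. q j i - v j i) \<le> gs_const n * (2 * \<kappa> / g))"
proof -
  obtain v' lam' where "orthonormal n n v'" "\<forall>k<n. in_eigenspace H' (complex_of_real (lam' k)) (v' k)"
    using hermitian_spectral_basis[OF H'] by blast
  then interpret H': spectral_basis H' n v' lam' using H' by unfold_locales auto
  note near = spectral_bases_eigenvalues_close[OF spectral_basis_axioms H'.spectral_basis_axioms close]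
  have card_H': "card {z. eigenvalue H' z} = card (lam' ` {..<n})"
    unfolding H'.eigenvalues_eq by (intro card_image) (auto simp: inj_on_def)
  show "card {z. eigenvalue H' z} = card (lam ` {..<n})"
    using matching_values(1)[OF gap(1) \<kappa>(1,2) gap(2) near(2) card[unfolded card_H']] card_H' by simp
  show "\<exists>j<n. cmod (z - complex_of_real (lam j)) \<le> \<kappa>" if "eigenvalue H' z" for z
    using that near(1) by (auto simp: H'.eigenvalue_iff simp flip: of_real_diff)
  obtain \<nu> where \<nu>: "\<forall>j<n. \<bar>\<nu> j - lam j\<bar> \<le> \<kappa>"
    and far: "\<And>j k. j < n \<Longrightarrow> k < n \<Longrightarrow> lam' k \<noteq> \<nu> j \<Longrightarrow> g / 2 \<le> \<bar>lam' k - lam j\<bar>"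
    using cluster_representatives[OF gap(1) \<kappa>(1,2) gap(2) near card[unfolded card_H']] by blast
  define w where "w j = (\<lambda>i. \<Sum>k\<in>{k. k < n \<and> lam' k = \<nu> j}. cinner n (v' k) (v j) * v' k i)" for j
  have w: "in_eigenspace H' (complex_of_real (\<nu> j)) (w j) \<and> cnorm n (\<lambda>i. w j i - v j i) \<le> 2 * \<kappa> / g"
    if j: "j < n" for j
  proof -
    have "cnorm n (\<lambda>i. mat_app H' (v j) i - complex_of_real (lam j) * v j i)
        = cnorm n (\<lambda>i. mat_app H' (v j) i - mat_app H (v j) i)"
      using eigen[OF j] carrier by (intro cnorm_cong) (auto simp: in_eigenspace_def)
    also have "\<dots> \<le> \<kappa>" using close[of "v j"] orthonormal_cnorm[OF orthonormal j] by simp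
    finally have res: "cnorm n (\<lambda>i. mat_app H' (v j) i - complex_of_real (lam j) * v j i) \<le> \<kappa>" .
    have g2: "0 < g / 2" using gap(1) by simp
    have far_j: "g / 2 \<le> \<bar>lam' k - lam j\<bar>" if "k < n" "lam' k \<noteq> \<nu> j" for k
      using far[OF j that] .
    have "in_eigenspace H' (complex_of_real (\<nu> j)) (w j)"
      unfolding w_def by (rule H'.eigenspace_projection_close(1)[OF g2 far_j res])
    moreover have "cnorm n (\<lambda>i. w j i - v j i) \<le> \<kappa> / (g / 2)"
      unfolding w_def by (rule H'.eigenspace_projection_close(2)[OF g2 far_j res])
    moreover have "\<kappa> / (g / 2) = 2 * \<kappa> / g" by simp
    ultimately show ?thesis by (simp only:)
  qed
  have \<eta>: "0 \<le> 2 * \<kappa> / g" using \<kappa>(1) gap(1) by simp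
  have "\<forall>j<n. cnorm n (\<lambda>i. w j i - v j i) \<le> 2 * \<kappa> / g"
    and "\<forall>j<n. in_eigenspace H' (complex_of_real (\<nu> j)) (w j)" using w by blast+
  from perturbed_gram_schmidt[OF hermitian_eigenspaces_orthogonal_subspaces[OF H'] orthonormal \<eta> \<kappa>(3) this]
  obtain q where "orthonormal n n q" "\<forall>j<n. in_eigenspace H' (complex_of_real (\<nu> j)) (q j)"
    "\<forall>j<n. cnorm n (\<lambda>i. q j i - v j i) \<le> gs_const n * (2 * \<kappa> / g)"
    by blast
  with \<nu> show "\<exists>q \<nu>. orthonormal n n q \<and> (\<forall>j<n. in_eigenspace H' (complex_of_real (\<nu> j)) (q j) \<and>
      \<bar>\<nu> j - lam j\<bar> \<le> \<kappa> \<and> cnorm n (\<lambda>i. q j i - v j i) \<le> gs_const n * (2 * \<kappa> / g))"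
    by blast
qed

end

section \<open>Distinct singular values in \<open>M_C\<close>\<close>

lemma card_image_le_blocks:
  fixes s :: "nat \<Rightarrow> 'a" and J :: "nat \<Rightarrow> nat set" and ls :: "nat list"
  assumes J: "\<forall>j<length ls. J j \<subseteq> {0..<n} \<and> card (J j) = ls ! j"
    and disj: "\<forall>j<length ls. \<forall>k<length ls. j \<noteq> k \<longrightarrow> J j \<inter> J k = {}"
    and const: "\<forall>j<length ls. \<forall>i\<in>J j. \<forall>i'\<in>J j. s i = s i'"
    and pos: "\<forall>j<length ls. 1 \<le> ls ! j"
  shows "card (s ` {..<n}) \<le> n - (\<Sum>j<length ls. ls ! j - 1)"
proof -
  define r where "r = length ls"
  define U where "U = (\<Union>j<r. J j)"
  have finJ: "finite (J j)" if "j < r" for j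
    using J that unfolding r_def by (auto intro: finite_subset)
  have U: "U \<subseteq> {..<n}"
  proof
    fix x assume "x \<in> U"
    then obtain j where "j < r" "x \<in> J j" unfolding U_def by auto
    moreover from this(1) have "J j \<subseteq> {0..<n}" using J unfolding r_def by blast
    ultimately show "x \<in> {..<n}" by auto
  qed
  have "card U = (\<Sum>j<r. card (J j))"
    unfolding U_def using finJ disj unfolding r_def by (intro card_UN_disjoint) auto
  also have "\<dots> = (\<Sum>j<r. ls ! j)" using J unfolding r_def by simp
  finally have cardU: "card U = (\<Sum>j<r. ls ! j)" .
  have block: "card (s ` J j) \<le> 1" if j: "j < r" for j
  proof -
    obtain i where i: "i \<in> J j" using J pos j unfolding r_def by fastforce
    have "s ` J j \<subseteq> {s i}" using const j i unfolding r_def by blast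
    from card_mono[OF _ this] show ?thesis by simp
  qed
  have "s ` {..<n} \<subseteq> s ` ({..<n} - U) \<union> (\<Union>j<r. s ` J j)" unfolding U_def by blast
  hence "card (s ` {..<n}) \<le> card (s ` ({..<n} - U) \<union> (\<Union>j<r. s ` J j))"
    using finJ by (intro card_mono) auto
  also have "\<dots> \<le> card (s ` ({..<n} - U)) + card (\<Union>j<r. s ` J j)" by (rule card_Un_le)
  also have "\<dots> \<le> card ({..<n} - U) + (\<Sum>j<r. card (s ` J j))"
    by (intro add_mono card_image_le card_UN_le) auto
  also have "\<dots> \<le> (n - card U) + r"
    using U block sum_mono[of "{..<r}" "\<lambda>j. card (s ` J j)" "\<lambda>_. 1"]
    by (simp add: card_Diff_subset finite_subset)
  finally have le: "card (s ` {..<n}) \<le> n - (\<Sum>j<r. ls ! j) + r" using cardU by simp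
  have "(\<Sum>j<r. ls ! j) = (\<Sum>j<r. (ls ! j - 1) + 1)"
    using pos unfolding r_def by (intro sum.cong) auto
  also have "\<dots> = (\<Sum>j<r. ls ! j - 1) + r" by (simp only: sum.distrib) simp
  finally have "(\<Sum>j<r. ls ! j) = (\<Sum>j<r. ls ! j - 1) + r" .
  moreover have "(\<Sum>j<r. ls ! j) \<le> n" using cardU card_mono[OF _ U] by simp
  ultimately show ?thesis using le unfolding r_def by linarith
qed

lemma prod_list_map_sort: "prod_list (map f (sort xs)) = prod_list (map f xs)"
  for f :: "'a::linorder \<Rightarrow> 'b::comm_monoid_mult"
proof -
  have "prod_list (map f (sort xs)) = prod_mset (mset (map f (sort xs)))" by (simp only: prod_mset_prod_list)
  also have "\<dots> = prod_mset (mset (map f xs))" by simp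
  finally show ?thesis by (simp only: prod_mset_prod_list)
qed

lemma linear_factors_eq_imp_mset_eq:
  fixes as bs :: "complex list"
  shows "(\<Prod>a\<leftarrow>as. [:- a, 1:]) = (\<Prod>b\<leftarrow>bs. [:- b, 1:]) \<Longrightarrow> mset as = mset bs"
proof (induction as arbitrary: bs)
  case Nil
  show ?case
  proof (cases bs)
    case (Cons b bs')
    hence "poly (\<Prod>b\<leftarrow>bs. [:- b, 1:]) b = 0" by simp
    thus ?thesis using Nil by simp
  qed simp
next
  case (Cons a as)
  have "poly (\<Prod>b\<leftarrow>bs. [:- b, 1:]) a = 0" using Cons.prems[symmetric] by simp
  hence ab: "a \<in> set bs" by (force simp: poly_prod_list prod_list_zero_iff o_def)
  have "[:- a, 1:] * (\<Prod>a\<leftarrow>as. [:- a, 1:]) = [:- a, 1:] * (\<Prod>b\<leftarrow>remove1 a bs. [:- b, 1:])"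
    using Cons.prems prod_list_map_remove1[OF ab, of "\<lambda>b. [:- b, 1:]"] by simp
  moreover have "[:- a, 1:] \<noteq> (0 :: complex poly)" by simp
  ultimately have "(\<Prod>a\<leftarrow>as. [:- a, 1:]) = (\<Prod>b\<leftarrow>remove1 a bs. [:- b, 1:])"
    using mult_left_cancel by blast
  hence "mset as = mset (remove1 a bs)" by (rule Cons.IH)
  thus ?case using ab by simp
qed

lemma sing_vals_eq:
  assumes cp: "char_poly (x * ctrans x) = (\<Prod>k\<leftarrow>[0..<n]. [:- complex_of_real (lam k), 1:])"
    and nonneg: "\<forall>k<n. 0 \<le> lam k" and dim: "dim_row x = n"
  shows "sing_vals x = sort (map (\<lambda>k. sqrt (lam k)) [0..<n])"
proof -
  define s0 where "s0 = sort (map (\<lambda>k. sqrt (lam k)) [0..<n])"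
  define P where "P s \<longleftrightarrow> length s = dim_row x \<and> sorted s \<and> (\<forall>v\<in>set s. 0 \<le> v) \<and>
      char_poly (x * ctrans x) = (\<Prod>v\<leftarrow>s. [:- complex_of_real (v\<^sup>2), 1:])" for s
  let ?sq = "\<lambda>v. complex_of_real (v\<^sup>2)"
  have prod_s0: "(\<Prod>v\<leftarrow>s0. [:- ?sq v, 1:]) = char_poly (x * ctrans x)"
  proof -
    have "(\<Prod>v\<leftarrow>s0. [:- ?sq v, 1:]) = (\<Prod>k\<leftarrow>[0..<n]. [:- ?sq (sqrt (lam k)), 1:])"
      unfolding s0_def prod_list_map_sort by (simp add: o_def)
    also have "\<dots> = char_poly (x * ctrans x)"
      unfolding cp using nonneg by (intro arg_cong[where f = prod_list] map_cong) auto
    finally show ?thesis .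
  qed
  have Ps0: "P s0" unfolding P_def using dim nonneg prod_s0 by (auto simp: s0_def)
  have uniq: "s = s0" if Ps: "P s" for s
  proof -
    have ms: "mset (map ?sq s) = mset (map ?sq s0)"
      using Ps prod_s0 unfolding P_def by (intro linear_factors_eq_imp_mset_eq) (simp add: o_def)
    have id: "image_mset (\<lambda>z. sqrt (Re z)) (mset (map ?sq t)) = mset t" if "\<forall>v\<in>set t. 0 \<le> v" for t
      using that by (induction t) auto
    have "mset s = image_mset (\<lambda>z. sqrt (Re z)) (mset (map ?sq s))"
      using id Ps unfolding P_def by simp
    also have "\<dots> = mset s0" using ms id Ps0 unfolding P_def by simp
    finally have "mset s = mset s0" .
    hence "sort s0 = s" using Ps unfolding P_def by (intro properties_for_sort) auto
    thus ?thesis using Ps0 unfolding P_def by (simp add: sorted_sort_id)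
  qed
  have "(THE s. P s) = s0" using Ps0 uniq by (rule the_equality)
  thus ?thesis unfolding sing_vals_def P_def s0_def .
qed

lemma cinner_ctrans_app:
  assumes B: "B \<in> carrier_mat n m"
  shows "cinner m (mat_app (ctrans B) x) (mat_app (ctrans B) y) = cinner n x (mat_app (B * ctrans B) y)"
  using cinner_mat_app_ctrans[OF ctrans_carrier_mat[OF B], of x "mat_app (ctrans B) y"]
  by (simp add: mat_app_mult[OF B ctrans_carrier_mat[OF B]])

lemma gram_eigenvalue_eq:
  assumes B: "B \<in> carrier_mat n m" and e: "in_eigenspace (B * ctrans B) (complex_of_real l) x"
    and x: "cnorm n x = 1"
  shows "l = (cnorm m (mat_app (ctrans B) x))\<^sup>2"
proof -
  have "complex_of_real l = cinner n x (mat_app (B * ctrans B) x)"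
    using cinner_eigen_right[OF gram_carrier[OF B] e, of x] x cnorm_eq_1_iff by simp
  also have "\<dots> = complex_of_real ((cnorm m (mat_app (ctrans B) x))\<^sup>2)"
    by (simp only: cinner_ctrans_app[OF B, symmetric] cinner_self)
  finally show ?thesis by (simp only: of_real_eq_iff)
qed

lemma card_eigenvalues_gram_le:
  assumes BM: "B \<in> M_C n m ls" and pos: "\<forall>j<length ls. 1 \<le> ls ! j"
  shows "card {z. eigenvalue (B * ctrans B) z} \<le> n - (\<Sum>j<length ls. ls ! j - 1)"
proof -
  have B: "B \<in> carrier_mat n m" using BM unfolding M_C_def by simp
  obtain v lam where on: "orthonormal n n v"
    and ev: "\<forall>k<n. in_eigenspace (B * ctrans B) (complex_of_real (lam k)) (v k)"
    using hermitian_spectral_basis[OF gram_carrier[OF B] gram_hermitian[OF B]] by blast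
  interpret spectral_basis "B * ctrans B" n v lam
    using gram_carrier[OF B] on ev by unfold_locales auto
  have nonneg: "\<forall>k<n. 0 \<le> lam k"
    using gram_eigenvalue_eq[OF B spec[OF ev, THEN mp] orthonormal_cnorm[OF on]] by simp
  have sv: "sing_vals B = sort (map (\<lambda>k. sqrt (lam k)) [0..<n])"
    using sing_vals_eq[OF char_poly_eq nonneg] B by simp
  obtain J where J: "\<forall>j<length ls. J j \<subseteq> {0..<n} \<and> card (J j) = ls ! j"
    and disj: "\<forall>j<length ls. \<forall>k<length ls. j \<noteq> k \<longrightarrow> J j \<inter> J k = {}"
    and const: "\<forall>j<length ls. \<forall>i\<in>J j. \<forall>i'\<in>J j. sing_vals B ! i = sing_vals B ! i'"
    using BM unfolding M_C_def by auto
  have "(!) (sing_vals B) ` {..<n} = set (sing_vals B)"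
    using sv by (auto simp: set_conv_nth)
  also have "\<dots> = sqrt ` lam ` {..<n}" using sv by (simp add: image_image atLeast0LessThan)
  finally have "card (sqrt ` lam ` {..<n}) \<le> n - (\<Sum>j<length ls. ls ! j - 1)"
    using card_image_le_blocks[OF J disj const pos] by simp
  moreover have "card (sqrt ` lam ` {..<n}) = card (lam ` {..<n})"
    using nonneg by (intro card_image inj_onI) auto
  moreover have "card {z. eigenvalue (B * ctrans B) z} = card (lam ` {..<n})"
    unfolding eigenvalues_eq by (intro card_image) (auto simp: inj_on_def)
  ultimately show ?thesis by simp
qed

section \<open>Singular value decompositions\<close>

lemma mult_diag_index:
  assumes M: "M \<in> carrier_mat p q" and D: "D \<in> carrier_mat q r"
    and diag: "\<forall>l<q. \<forall>j<r. l \<noteq> j \<longrightarrow> D $$ (l,j) = 0" and i: "i < p" and j: "j < q" "j < r"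
  shows "(M * D) $$ (i,j) = M $$ (i,j) * D $$ (j,j)"
proof -
  have "(M * D) $$ (i,j) = (\<Sum>l<q. M $$ (i,l) * D $$ (l,j))" by (rule mat_mult_index_sum[OF M D i j(2)])
  also have "\<dots> = (\<Sum>l<q. if l = j then M $$ (i,j) * D $$ (j,j) else 0)"
    using diag j by (intro sum.cong) auto
  also have "\<dots> = M $$ (i,j) * D $$ (j,j)" using j by simp
  finally show ?thesis .
qed

locale svd =
  fixes n m :: nat and A PL D PR :: "complex mat"
  assumes n_le_m: "n \<le> m" and PL: "PL \<in> unitary_mat n" and PR: "PR \<in> unitary_mat m"
    and D: "D \<in> real_diag_mat n m" and A_eq: "A = PL * D * ctrans PR"
begin

text \<open>\<open>real_diag_mat\<close> allows negative diagonal entries, so \<open>sv j\<close> is a singular value only up to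
  sign; the perturbed decomposition keeps these signs.\<close>

definition sv :: "nat \<Rightarrow> real" where
  "sv j = Re (D $$ (j,j))"

lemma PL_carrier: "PL \<in> carrier_mat n n" and PR_carrier: "PR \<in> carrier_mat m m"
  and D_carrier: "D \<in> carrier_mat n m" and A_carrier: "A \<in> carrier_mat n m"
  using PL PR D unfolding unitary_mat_def real_diag_mat_def A_eq by auto

lemma D_diag: "\<forall>l<n. \<forall>j<m. l \<noteq> j \<longrightarrow> D $$ (l,j) = 0"
  using D unfolding real_diag_mat_def by auto

lemma D_diag_entry: "j < n \<Longrightarrow> D $$ (j,j) = complex_of_real (sv j)"
  using D n_le_m unfolding real_diag_mat_def sv_def by (auto simp: complex_is_Real_iff complex_eq_iff)

lemma A_mult_PR: "A * PR = PL * D"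
proof -
  have PLD: "PL * D \<in> carrier_mat n m" using PL_carrier D_carrier by simp
  have "A * PR = PL * D * (ctrans PR * PR)"
    unfolding A_eq using assoc_mult_mat[OF PLD ctrans_carrier_mat[OF PR_carrier] PR_carrier] by simp
  also have "ctrans PR * PR = 1\<^sub>m m" using PR unfolding unitary_mat_def by simp
  finally show ?thesis using right_mult_one_mat[OF PLD] by simp
qed

lemma ctrans_A_mult_PL: "ctrans A * PL = PR * ctrans D"
proof -
  have cD: "ctrans D \<in> carrier_mat m n" and cPL: "ctrans PL \<in> carrier_mat n n"
    using ctrans_carrier_mat D_carrier PL_carrier by auto
  have "ctrans A = PR * (ctrans D * ctrans PL)"
    unfolding A_eq using ctrans_mult[OF mult_carrier_mat[OF PL_carrier D_carrier] ctrans_carrier_mat[OF PR_carrier]]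
      ctrans_mult[OF PL_carrier D_carrier] by simp
  hence "ctrans A * PL = PR * (ctrans D * (ctrans PL * PL))"
    using assoc_mult_mat[OF PR_carrier mult_carrier_mat[OF cD cPL] PL_carrier]
      assoc_mult_mat[OF cD cPL PL_carrier] by simp
  also have "ctrans PL * PL = 1\<^sub>m n" using PL unfolding unitary_mat_def by simp
  finally show ?thesis using right_mult_one_mat[OF cD] by simp
qed

lemma A_col_PR:
  assumes j: "j < n" and i: "i < n"
  shows "mat_app A (col_fn PR j) i = complex_of_real (sv j) * col_fn PL j i"
proof -
  have "mat_app A (col_fn PR j) i = (PL * D) $$ (i,j)"
    using mat_app_col_fn[OF A_carrier PR_carrier i] j n_le_m A_mult_PR by simp
  also have "\<dots> = PL $$ (i,j) * D $$ (j,j)"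
    using mult_diag_index[OF PL_carrier D_carrier D_diag i j] j n_le_m by simp
  finally show ?thesis using i j PL_carrier by (simp add: D_diag_entry col_fn_def)
qed

lemma ctrans_A_col_PL:
  assumes j: "j < n" and i: "i < m"
  shows "mat_app (ctrans A) (col_fn PL j) i = complex_of_real (sv j) * col_fn PR j i"
proof -
  have diag': "\<forall>l<m. \<forall>k<n. l \<noteq> k \<longrightarrow> ctrans D $$ (l,k) = 0" using D_diag D_carrier by auto
  have "mat_app (ctrans A) (col_fn PL j) i = (PR * ctrans D) $$ (i,j)"
    using mat_app_col_fn[OF ctrans_carrier_mat[OF A_carrier] PL_carrier i j] ctrans_A_mult_PL by simp
  also have "\<dots> = PR $$ (i,j) * cnj (D $$ (j,j))"
    using mult_diag_index[OF PR_carrier ctrans_carrier_mat[OF D_carrier] diag' i] j n_le_m D_carrier by simp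
  finally show ?thesis using i j PR_carrier by (simp add: D_diag_entry col_fn_def)
qed

lemma gram_spectral_basis: "spectral_basis (A * ctrans A) n (col_fn PL) (\<lambda>j. (sv j)\<^sup>2)"
proof
  show "A * ctrans A \<in> carrier_mat n n" by (rule gram_carrier[OF A_carrier])
  show "orthonormal n n (col_fn PL)" by (rule unitary_col_fn_orthonormal[OF PL])
  fix j assume j: "j < n"
  show "in_eigenspace (A * ctrans A) (complex_of_real ((sv j)\<^sup>2)) (col_fn PL j)"
    unfolding in_eigenspace_def
  proof (intro allI impI)
    fix i assume "i < dim_row (A * ctrans A)"
    hence i: "i < n" using A_carrier by simp
    have "mat_app (A * ctrans A) (col_fn PL j) = mat_app A (mat_app (ctrans A) (col_fn PL j))"
      by (rule mat_app_mult[OF A_carrier ctrans_carrier_mat[OF A_carrier]])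
    also have "\<dots> = mat_app A (\<lambda>k. complex_of_real (sv j) * col_fn PR j k)"
      using A_carrier by (intro mat_app_cong) (simp add: ctrans_A_col_PL[OF j])
    finally show "mat_app (A * ctrans A) (col_fn PL j) i = complex_of_real ((sv j)\<^sup>2) * col_fn PL j i"
      using A_col_PR[OF j i] by (simp add: mat_app_scale power2_eq_square)
  qed
qed

end

lemma gram_perturbation:
  assumes A: "A \<in> carrier_mat n m" and B: "B \<in> carrier_mat n m"
    and c: "0 \<le> c" "\<forall>i<n. \<forall>k<m. cmod (A $$ (i,k)) \<le> c"
    and close: "\<forall>i<n. \<forall>k<m. cmod (A $$ (i,k) - B $$ (i,k)) \<le> \<delta>" and \<delta>: "0 \<le> \<delta>" "\<delta> \<le> 1"
  shows "cnorm n (\<lambda>i. mat_app (B * ctrans B) x i - mat_app (A * ctrans A) x i)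
    \<le> \<delta> * (2 * c + 1) * real m * real n * cnorm n x"
proof -
  have HA: "A * ctrans A \<in> carrier_mat n n" and HB: "B * ctrans B \<in> carrier_mat n n"
    using gram_carrier A B by auto
  have entry: "cmod ((B * ctrans B - A * ctrans A) $$ (i,k)) \<le> real m * (\<delta> * (2 * c + 1))"
    if i: "i < n" and k: "k < n" for i k
  proof -
    have gram_entry: "(M * ctrans M) $$ (i,k) = (\<Sum>l<m. M $$ (i,l) * cnj (M $$ (k,l)))"
      if "M \<in> carrier_mat n m" for M
      using mat_mult_index_sum[OF that ctrans_carrier_mat[OF that] i k] that k by simp
    have "(B * ctrans B - A * ctrans A) $$ (i,k) = (B * ctrans B) $$ (i,k) - (A * ctrans A) $$ (i,k)"
      by (rule index_minus_mat(1)) (use HA i k in auto)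
    also have "\<dots> = (\<Sum>l<m. (B $$ (i,l) - A $$ (i,l)) * cnj (B $$ (k,l)) + A $$ (i,l) * cnj (B $$ (k,l) - A $$ (k,l)))"
      unfolding gram_entry[OF A] gram_entry[OF B] by (simp add: sum_subtractf[symmetric] algebra_simps)
    also have "cmod \<dots> \<le> (\<Sum>l<m. \<delta> * (c + 1) + c * \<delta>)"
    proof (rule order_trans[OF norm_sum sum_mono])
      fix l assume "l \<in> {..<m}"
      hence l: "l < m" by simp
      have AB: "cmod (B $$ (i,l) - A $$ (i,l)) \<le> \<delta>" "cmod (B $$ (k,l) - A $$ (k,l)) \<le> \<delta>"
        using close i k l by (auto simp: norm_minus_commute)
      have "cmod (B $$ (k,l)) \<le> cmod (A $$ (k,l)) + cmod (B $$ (k,l) - A $$ (k,l))"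
        using norm_triangle_ineq[of "A $$ (k,l)" "B $$ (k,l) - A $$ (k,l)"] by simp
      hence Bkl: "cmod (B $$ (k,l)) \<le> c + 1" using c k l AB \<delta> by fastforce
      show "cmod ((B $$ (i,l) - A $$ (i,l)) * cnj (B $$ (k,l)) + A $$ (i,l) * cnj (B $$ (k,l) - A $$ (k,l)))
          \<le> \<delta> * (c + 1) + c * \<delta>"
        using AB Bkl c i l \<delta>
        by (intro order_trans[OF norm_triangle_ineq] add_mono)
          (auto simp: norm_mult complex_cnj_diff[symmetric] simp del: complex_cnj_diff intro!: mult_mono)
    qed
    finally show ?thesis by (simp add: algebra_simps)
  qed
  have "cnorm n (\<lambda>i. mat_app (B * ctrans B) x i - mat_app (A * ctrans A) x i)
      = cnorm n (mat_app (B * ctrans B - A * ctrans A) x)"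
    by (simp add: mat_app_minus_mat[OF HB HA])
  also have "\<dots> \<le> real m * (\<delta> * (2 * c + 1)) * sqrt (real n * real n) * cnorm n x"
    using entry c \<delta> by (intro cnorm_mat_app_le[OF minus_carrier_mat[OF HA]]) auto
  finally show ?thesis by (simp add: algebra_simps)
qed

lemma sqrt_diff_le:
  assumes a: "0 < a" and b: "0 \<le> b"
  shows "\<bar>sqrt a - sqrt b\<bar> \<le> \<bar>a - b\<bar> / sqrt a"
proof -
  have "a - b = (sqrt a - sqrt b) * (sqrt a + sqrt b)" using a b by (simp add: algebra_simps)
  hence "\<bar>a - b\<bar> = \<bar>sqrt a - sqrt b\<bar> * (sqrt a + sqrt b)" using a b by (simp add: abs_mult)
  hence "\<bar>sqrt a - sqrt b\<bar> * sqrt a \<le> \<bar>a - b\<bar>" using b by (simp add: mult_left_mono)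
  thus ?thesis using a by (simp add: field_simps)
qed

lemma signed_sqrt_close:
  assumes "\<sigma> \<noteq> 0" and "0 \<le> \<nu>"
  shows "\<bar>\<sigma> - sgn \<sigma> * sqrt \<nu>\<bar> \<le> \<bar>\<sigma>\<^sup>2 - \<nu>\<bar> / \<bar>\<sigma>\<bar>"
proof -
  have "\<bar>\<sigma> - sgn \<sigma> * sqrt \<nu>\<bar> = \<bar>sqrt (\<sigma>\<^sup>2) - sqrt \<nu>\<bar>"
    using assms by (cases "\<sigma> > 0") (auto simp: abs_minus_commute)
  also have "\<dots> \<le> \<bar>\<sigma>\<^sup>2 - \<nu>\<bar> / sqrt (\<sigma>\<^sup>2)" using assms by (intro sqrt_diff_le) auto
  finally show ?thesis by simp
qed

lemma right_singular_vectors_orthonormal: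
  assumes B: "B \<in> carrier_mat n m" and q: "orthonormal n n q"
    and e: "\<forall>j<n. in_eigenspace (B * ctrans B) (complex_of_real ((f j)\<^sup>2)) (q j)" and f: "\<forall>j<n. f j \<noteq> 0"
  shows "orthonormal m n (\<lambda>j i. complex_of_real (1 / f j) * mat_app (ctrans B) (q j) i)"
  unfolding orthonormal_def
proof (intro allI impI)
  fix i j assume i: "i < n" and j: "j < n"
  have "cinner m (\<lambda>k. complex_of_real (1 / f i) * mat_app (ctrans B) (q i) k)
      (\<lambda>k. complex_of_real (1 / f j) * mat_app (ctrans B) (q j) k)
    = complex_of_real (1 / f i * (1 / f j)) * cinner n (q i) (mat_app (B * ctrans B) (q j))"
    by (simp only: cinner_scale_left cinner_scale_right cinner_ctrans_app[OF B]
        complex_cnj_complex_of_real of_real_mult mult.assoc)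
  also have "\<dots> = complex_of_real (1 / f i * (1 / f j) * (f j)\<^sup>2) * cinner n (q i) (q j)"
    using cinner_eigen_right[OF gram_carrier[OF B]] e j by simp
  also have "\<dots> = (if i = j then 1 else 0)"
    using q i j f unfolding orthonormal_def by (simp add: power2_eq_square)
  finally show "cinner m (\<lambda>k. complex_of_real (1 / f i) * mat_app (ctrans B) (q i) k)
      (\<lambda>k. complex_of_real (1 / f j) * mat_app (ctrans B) (q j) k) = (if i = j then 1 else 0)" .
qed

lemma right_singular_vector_close:
  assumes p: "cnorm m p = 1" and f: "f \<noteq> 0" and y: "\<forall>i<m. y i = complex_of_real \<sigma> * p i"
  shows "cnorm m (\<lambda>i. complex_of_real (1 / f) * z i - p i) \<le> (cnorm m (\<lambda>i. z i - y i) + \<bar>\<sigma> - f\<bar>) / \<bar>f\<bar>"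
proof -
  have "cnorm m (\<lambda>i. complex_of_real (1 / f) * z i - p i)
      = cnorm m (\<lambda>i. complex_of_real (1 / f) * (z i - y i) + complex_of_real ((\<sigma> - f) / f) * p i)"
    using y f by (intro cnorm_cong) (simp add: field_simps)
  also have "\<dots> \<le> \<bar>1 / f\<bar> * cnorm m (\<lambda>i. z i - y i) + \<bar>(\<sigma> - f) / f\<bar> * cnorm m p"
    by (rule order_trans[OF cnorm_triangle], unfold cnorm_scale_real, rule order_refl)
  also have "\<dots> = (cnorm m (\<lambda>i. z i - y i) + \<bar>\<sigma> - f\<bar>) / \<bar>f\<bar>"
    using p f by (simp add: abs_divide add_divide_distrib)
  finally show ?thesis .
qed

lemma ctrans_app_close:
  assumes A: "A \<in> carrier_mat n m" and B: "B \<in> carrier_mat n m"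
    and c: "0 \<le> c" "\<forall>i<n. \<forall>k<m. cmod (A $$ (i,k)) \<le> c"
    and close: "\<forall>i<n. \<forall>k<m. cmod (A $$ (i,k) - B $$ (i,k)) \<le> \<delta>" and \<delta>: "0 \<le> \<delta>"
  shows "cnorm m (\<lambda>i. mat_app (ctrans B) x i - mat_app (ctrans A) y i)
    \<le> \<delta> * sqrt (real m * real n) * cnorm n x + c * sqrt (real m * real n) * cnorm n (\<lambda>i. x i - y i)"
proof -
  have cA: "ctrans A \<in> carrier_mat m n" and cB: "ctrans B \<in> carrier_mat m n"
    using ctrans_carrier_mat A B by auto
  have "cnorm m (\<lambda>i. mat_app (ctrans B) x i - mat_app (ctrans A) y i)
      \<le> cnorm m (\<lambda>i. mat_app (ctrans B) x i - mat_app (ctrans A) x i)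
        + cnorm m (\<lambda>i. mat_app (ctrans A) x i - mat_app (ctrans A) y i)"
    by (rule cnorm_diff_triangle)
  also have "cnorm m (\<lambda>i. mat_app (ctrans B) x i - mat_app (ctrans A) x i)
      = cnorm m (mat_app (ctrans B - ctrans A) x)" by (simp add: mat_app_minus_mat[OF cB cA])
  also have "\<dots> \<le> \<delta> * sqrt (real m * real n) * cnorm n x"
    using close A B \<delta> by (intro cnorm_mat_app_le[OF minus_carrier_mat[OF cA]])
      (auto simp: complex_cnj_diff[symmetric] norm_minus_commute simp del: complex_cnj_diff)
  also have "cnorm m (\<lambda>i. mat_app (ctrans A) x i - mat_app (ctrans A) y i)
      = cnorm m (mat_app (ctrans A) (\<lambda>i. x i - y i))" by (simp add: mat_app_diff)
  also have "\<dots> \<le> c * sqrt (real m * real n) * cnorm n (\<lambda>i. x i - y i)"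
    using c A by (intro cnorm_mat_app_le[OF cA]) auto
  finally show ?thesis by simp
qed

lemma orthonormal_extend_close:
  assumes r: "orthonormal m n r" and p: "orthonormal m m p" and nm: "n \<le> m"
    and rp: "\<forall>j<n. cnorm m (\<lambda>i. r j i - p j i) \<le> \<tau>" and \<tau>: "0 \<le> \<tau>" "gs_const m * \<tau> \<le> 1"
  shows "\<exists>q. orthonormal m m q \<and> (\<forall>j<n. q j = r j) \<and> (\<forall>j<m. cnorm m (\<lambda>i. q j i - p j i) \<le> gs_const m * \<tau>)"
proof -
  define w where "w j = (if j < n then r j else p j)" for j
  have E: "orthogonal_subspaces m (\<lambda>(_::unit) _. True)" unfolding orthogonal_subspaces_def by simp
  have "cnorm m (\<lambda>i. 0) = 0" by (simp add: cnorm_eq_0_iff)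
  hence "\<forall>j<m. cnorm m (\<lambda>i. w j i - p j i) \<le> \<tau>" using rp \<tau> by (simp add: w_def)
  from perturbed_gram_schmidt[OF E p \<tau> this]
  obtain q where "orthonormal m m q" "\<forall>j<m. cnorm m (\<lambda>i. q j i - p j i) \<le> gs_const m * \<tau>"
    "\<forall>k\<le>m. orthonormal m k w \<longrightarrow> (\<forall>j<k. q j = w j)" by auto
  moreover have "orthonormal m n w" using r unfolding orthonormal_def w_def by simp
  ultimately show ?thesis using nm unfolding w_def by auto
qed

lemma svd_from_singular_vectors:
  assumes B: "B \<in> carrier_mat n m" and nm: "n \<le> m"
    and q: "orthonormal n n q" and qR: "orthonormal m m qR" and f: "\<forall>j<n. f j \<noteq> 0"
    and r: "\<forall>j<n. \<forall>i<m. qR j i = complex_of_real (1 / f j) * mat_app (ctrans B) (q j) i"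
  shows "B = mat_of_col_fns n n q * mat n m (\<lambda>(i,k). if i = k then complex_of_real (f i) else 0)
    * ctrans (mat_of_col_fns m m qR)"
    (is "B = ?QL * ?F * ctrans ?QR")
proof -
  have QL: "?QL \<in> carrier_mat n n" and F: "?F \<in> carrier_mat n m" and QR: "?QR \<in> carrier_mat m m"
    by auto
  have cQL: "ctrans ?QL \<in> carrier_mat n n" and cQR: "ctrans ?QR \<in> carrier_mat m m"
    using ctrans_carrier_mat QL QR by auto
  have "?F * ctrans ?QR = ctrans ?QL * B"
  proof (rule eq_matI)
    fix j k assume "j < dim_row (ctrans ?QL * B)" and "k < dim_col (ctrans ?QL * B)"
    hence j: "j < n" and k: "k < m" using B by auto
    have "(?F * ctrans ?QR) $$ (j,k) = (\<Sum>l<m. ?F $$ (j,l) * ctrans ?QR $$ (l,k))"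
      by (rule mat_mult_index_sum[OF F cQR j k])
    also have "\<dots> = (\<Sum>l<m. if l = j then complex_of_real (f j) * cnj (qR j k) else 0)"
      using j k nm by (intro sum.cong) auto
    also have "\<dots> = complex_of_real (f j) * cnj (qR j k)" using j nm by simp
    also have "\<dots> = cnj (mat_app (ctrans B) (q j) k)" using r f j k by simp
    also have "\<dots> = (ctrans ?QL * B) $$ (j,k)"
      using B j k by (simp add: mat_app_def scalar_prod_def atLeast0LessThan mult.commute)
    finally show "(?F * ctrans ?QR) $$ (j,k) = (ctrans ?QL * B) $$ (j,k)" .
  qed (use B in auto)
  hence "?QL * ?F * ctrans ?QR = ?QL * ctrans ?QL * B"
    using assoc_mult_mat[OF QL F cQR] assoc_mult_mat[OF QL cQL B] by simp
  also have "?QL * ctrans ?QL = 1\<^sub>m n" using orthonormal_unitary[OF q] unfolding unitary_mat_def by simp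
  finally show ?thesis using B by simp
qed

lemma singular_value_close:
  fixes \<sigma> \<nu> m0 \<kappa> :: real
  assumes m0: "0 < m0" "m0 \<le> \<sigma>\<^sup>2" and \<nu>: "\<bar>\<nu> - \<sigma>\<^sup>2\<bar> \<le> \<kappa>" and \<kappa>: "\<kappa> \<le> m0 / 2"
  shows "(sgn \<sigma> * sqrt \<nu>)\<^sup>2 = \<nu>" and "sqrt (m0 / 2) \<le> \<bar>sgn \<sigma> * sqrt \<nu>\<bar>"
    and "\<bar>\<sigma> - sgn \<sigma> * sqrt \<nu>\<bar> \<le> \<kappa> / sqrt m0"
proof -
  have \<sigma>: "\<sigma> \<noteq> 0" using m0 by auto
  have \<nu>_ge: "m0 / 2 \<le> \<nu>" using m0 \<nu> \<kappa> by linarith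
  show "(sgn \<sigma> * sqrt \<nu>)\<^sup>2 = \<nu>"
    using \<sigma> \<nu>_ge m0 by (cases "\<sigma> > 0") (auto simp: power_mult_distrib)
  show "sqrt (m0 / 2) \<le> \<bar>sgn \<sigma> * sqrt \<nu>\<bar>"
    using \<sigma> \<nu>_ge m0 by (simp add: abs_mult real_sqrt_le_mono)
  have "sqrt m0 \<le> \<bar>\<sigma>\<bar>" using real_sqrt_le_mono[OF m0(2)] by simp
  hence "\<bar>\<sigma>\<^sup>2 - \<nu>\<bar> / \<bar>\<sigma>\<bar> \<le> \<kappa> / sqrt m0"
    using \<nu> m0 by (intro frac_le) (auto simp: abs_minus_commute)
  moreover have "0 \<le> \<nu>" using \<nu>_ge m0 by simp
  ultimately show "\<bar>\<sigma> - sgn \<sigma> * sqrt \<nu>\<bar> \<le> \<kappa> / sqrt m0"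
    using signed_sqrt_close[OF \<sigma>] by (rule_tac order_trans) auto
qed

context svd
begin

lemma svd_of_close_singular_vectors:
  assumes B: "B \<in> carrier_mat n m" and q: "orthonormal n n q" and qR: "orthonormal m m qR"
    and f: "\<forall>j<n. f j \<noteq> 0"
    and r: "\<forall>j<n. \<forall>i<m. qR j i = complex_of_real (1 / f j) * mat_app (ctrans B) (q j) i"
    and fs: "\<forall>j<n. \<bar>sv j - f j\<bar> \<le> s"
    and qu: "\<forall>j<n. cnorm n (\<lambda>i. q j i - col_fn PL j i) \<le> \<theta>"
    and qRp: "\<forall>j<m. cnorm m (\<lambda>i. qR j i - col_fn PR j i) \<le> \<rho>"
  shows "\<exists>QL F QR. QL \<in> unitary_mat n \<and> QR \<in> unitary_mat m \<and> F \<in> real_diag_mat n m \<and>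
    B = QL * F * ctrans QR \<and>
    (\<forall>i<n. cmod (D $$ (i,i) - F $$ (i,i)) \<le> s) \<and>
    (\<forall>i<n. \<forall>j<n. cmod (QL $$ (i,j) - PL $$ (i,j)) \<le> \<theta>) \<and>
    (\<forall>i<m. \<forall>j<m. cmod (QR $$ (i,j) - PR $$ (i,j)) \<le> \<rho>)"
proof (intro exI conjI)
  let ?F = "mat n m (\<lambda>(i,k). if i = k then complex_of_real (f i) else 0)"
  show "mat_of_col_fns n n q \<in> unitary_mat n" by (rule orthonormal_unitary[OF q])
  show "mat_of_col_fns m m qR \<in> unitary_mat m" by (rule orthonormal_unitary[OF qR])
  show "?F \<in> real_diag_mat n m" unfolding real_diag_mat_def by auto
  show "B = mat_of_col_fns n n q * ?F * ctrans (mat_of_col_fns m m qR)"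
    by (rule svd_from_singular_vectors[OF B n_le_m q qR f r])
  show "\<forall>i<n. cmod (D $$ (i,i) - ?F $$ (i,i)) \<le> s"
    using fs n_le_m by (simp add: D_diag_entry flip: of_real_diff)
  show "\<forall>i<n. \<forall>j<n. cmod (mat_of_col_fns n n q $$ (i,j) - PL $$ (i,j)) \<le> \<theta>"
  proof (intro allI impI)
    fix i j assume i: "i < n" and j: "j < n"
    have "cmod (mat_of_col_fns n n q $$ (i,j) - PL $$ (i,j)) = cmod (q j i - col_fn PL j i)"
      using i j PL_carrier by (simp add: col_fn_def)
    also have "\<dots> \<le> cnorm n (\<lambda>i. q j i - col_fn PL j i)" by (rule norm_le_cnorm[OF i])
    also have "\<dots> \<le> \<theta>" using qu j by blast
    finally show "cmod (mat_of_col_fns n n q $$ (i,j) - PL $$ (i,j)) \<le> \<theta>" .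
  qed
  show "\<forall>i<m. \<forall>j<m. cmod (mat_of_col_fns m m qR $$ (i,j) - PR $$ (i,j)) \<le> \<rho>"
  proof (intro allI impI)
    fix i j assume i: "i < m" and j: "j < m"
    have "cmod (mat_of_col_fns m m qR $$ (i,j) - PR $$ (i,j)) = cmod (qR j i - col_fn PR j i)"
      using i j PR_carrier by (simp add: col_fn_def)
    also have "\<dots> \<le> cnorm m (\<lambda>i. qR j i - col_fn PR j i)" by (rule norm_le_cnorm[OF i])
    also have "\<dots> \<le> \<rho>" using qRp j by blast
    finally show "cmod (mat_of_col_fns m m qR $$ (i,j) - PR $$ (i,j)) \<le> \<rho>" .
  qed
qed

end

section \<open>Stability of the singular value decomposition\<close>

lemma eventually_at_right_0_exists: "\<forall>\<^sub>F \<delta> in at_right (0::real). P \<delta> \<Longrightarrow> \<exists>\<delta>>0. P \<delta>"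
  using eventually_happens[OF eventually_conj[OF eventually_at_right_less]] trivial_limit_at_right_real
  unfolding trivial_limit_def by blast

lemma finite_family_pos_lower_bound:
  fixes f :: "nat \<Rightarrow> real"
  assumes "\<forall>j<n. 0 < f j"
  shows "\<exists>b>0. \<forall>j<n. b \<le> f j"
  using assms by (intro exI[of _ "Min (insert 1 (f ` {..<n}))"]) auto

lemma finite_family_separated:
  fixes f :: "nat \<Rightarrow> real"
  shows "\<exists>g>0. \<forall>i<n. \<forall>j<n. f i \<noteq> f j \<longrightarrow> g \<le> \<bar>f i - f j\<bar>"
proof -
  let ?G = "(\<lambda>(i,j). \<bar>f i - f j\<bar>) ` {(i,j). i < n \<and> j < n \<and> f i \<noteq> f j}"
  have fin: "finite ?G" by (rule finite_imageI, rule finite_subset[of _ "{..<n} \<times> {..<n}"]) auto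
  show ?thesis
  proof (intro exI conjI allI impI)
    show "0 < Min (insert 1 ?G)" using fin by (subst Min_gr_iff) auto
    fix i j assume "i < n" "j < n" "f i \<noteq> f j"
    hence "\<bar>f i - f j\<bar> \<in> insert 1 ?G" by (auto intro!: image_eqI[of _ _ "(i,j)"])
    thus "Min (insert 1 ?G) \<le> \<bar>f i - f j\<bar>" using fin by (intro Min_le) auto
  qed
qed

lemma mat_entries_bounded: "\<exists>c\<ge>0. \<forall>i<n. \<forall>k<m. cmod (A $$ (i,k)) \<le> c"
proof (intro exI conjI allI impI)
  show "0 \<le> (\<Sum>i<n. \<Sum>k<m. cmod (A $$ (i,k)))" by (intro sum_nonneg) auto
  fix i k assume "i < n" "k < m"
  hence "cmod (A $$ (i,k)) \<le> (\<Sum>k<m. cmod (A $$ (i,k)))"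
    by (intro member_le_sum) auto
  also have "\<dots> \<le> (\<Sum>i<n. \<Sum>k<m. cmod (A $$ (i,k)))"
    using \<open>i < n\<close> by (intro member_le_sum[of i "{..<n}" "\<lambda>i. \<Sum>k<m. cmod (A $$ (i,k))"]) (auto intro: sum_nonneg)
  finally show "cmod (A $$ (i,k)) \<le> (\<Sum>i<n. \<Sum>k<m. cmod (A $$ (i,k)))" .
qed

locale svd_with_gap = svd +
  fixes m0 g c :: real
  assumes m0: "0 < m0" "\<forall>j<n. m0 \<le> (sv j)\<^sup>2"
    and gap: "0 < g" "\<forall>i<n. \<forall>j<n. (sv i)\<^sup>2 \<noteq> (sv j)\<^sup>2 \<longrightarrow> g \<le> \<bar>(sv i)\<^sup>2 - (sv j)\<^sup>2\<bar>"
    and entries: "0 \<le> c" "\<forall>i<n. \<forall>k<m. cmod (A $$ (i,k)) \<le> c"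
begin

text \<open>For \<open>B\<close> entrywise \<open>\<delta>\<close>-close to \<open>A\<close>: \<open>gram_bound \<delta>\<close> bounds \<open>B B\<^sup>* - A A\<^sup>*\<close> as an operator,
  \<open>left_bound \<delta>\<close> the displacement of the left singular vectors (the eigenspace projection moves
  them by \<open>2 gram_bound \<delta> / g\<close>, Gram--Schmidt multiplies this by \<open>gs_const n\<close>) and
  \<open>right_bound \<delta>\<close> that of the vectors \<open>B\<^sup>* q\<^sub>j / f\<^sub>j\<close>.\<close>

definition gram_bound :: "real \<Rightarrow> real" where
  "gram_bound \<delta> = \<delta> * (2 * c + 1) * real m * real n"

definition left_bound :: "real \<Rightarrow> real" where
  "left_bound \<delta> = gs_const n * (2 * gram_bound \<delta> / g)"

definition right_bound :: "real \<Rightarrow> real" where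
  "right_bound \<delta> = (\<delta> * sqrt (real m * real n) + c * sqrt (real m * real n) * left_bound \<delta>
    + gram_bound \<delta> / sqrt m0) / sqrt (m0 / 2)"

lemma bounds_nonneg:
  assumes "0 \<le> \<delta>"
  shows "0 \<le> gram_bound \<delta>" "0 \<le> left_bound \<delta>" "0 \<le> right_bound \<delta>"
proof -
  show g0: "0 \<le> gram_bound \<delta>" using assms entries(1) unfolding gram_bound_def by simp
  show l0: "0 \<le> left_bound \<delta>" using g0 gap(1) gs_const_ge_1[of n] unfolding left_bound_def by simp
  show "0 \<le> right_bound \<delta>" using assms entries(1) m0(1) g0 l0 unfolding right_bound_def by simp
qed

lemma bounds_tendsto_0:
  "(gram_bound \<longlongrightarrow> 0) (at_right 0)" "(left_bound \<longlongrightarrow> 0) (at_right 0)" "(right_bound \<longlongrightarrow> 0) (at_right 0)"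
proof -
  have "((\<lambda>\<delta>. \<delta> * (2 * c + 1) * real m * real n) \<longlongrightarrow> 0 * (2 * c + 1) * real m * real n) (at_right 0)"
    by (intro tendsto_intros)
  thus gram: "(gram_bound \<longlongrightarrow> 0) (at_right 0)" by (simp add: gram_bound_def[abs_def])
  have "((\<lambda>\<delta>. gs_const n * (2 * gram_bound \<delta> / g)) \<longlongrightarrow> gs_const n * (2 * 0 / g)) (at_right 0)"
    using gap(1) by (intro tendsto_intros gram) auto
  thus left: "(left_bound \<longlongrightarrow> 0) (at_right 0)" by (simp add: left_bound_def[abs_def])
  have "((\<lambda>\<delta>. (\<delta> * sqrt (real m * real n) + c * sqrt (real m * real n) * left_bound \<delta> + gram_bound \<delta> / sqrt m0)
      / sqrt (m0 / 2)) \<longlongrightarrow> (0 * sqrt (real m * real n) + c * sqrt (real m * real n) * 0 + 0 / sqrt m0)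
      / sqrt (m0 / 2)) (at_right 0)"
    using m0(1) by (intro tendsto_intros gram left) auto
  thus "(right_bound \<longlongrightarrow> 0) (at_right 0)" by (simp add: right_bound_def[abs_def])
qed

lemma left_singular_perturbation:
  assumes B: "B \<in> carrier_mat n m" "\<forall>i<n. \<forall>k<m. cmod (A $$ (i,k) - B $$ (i,k)) \<le> \<delta>"
    and card: "card {z. eigenvalue (B * ctrans B) z} \<le> card ((\<lambda>j. (sv j)\<^sup>2) ` {..<n})"
    and \<delta>: "0 \<le> \<delta>" "\<delta> \<le> 1"
    and small: "gram_bound \<delta> \<le> g / 4" "gram_bound \<delta> \<le> m0 / 2" "left_bound \<delta> \<le> 1"
  shows "\<not> eigenvalue (B * ctrans B) 0"
    and "card {z. eigenvalue (B * ctrans B) z} = card ((\<lambda>j. (sv j)\<^sup>2) ` {..<n})"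
    and "\<exists>q f. orthonormal n n q \<and> (\<forall>j<n. in_eigenspace (B * ctrans B) (complex_of_real ((f j)\<^sup>2)) (q j) \<and>
      sqrt (m0 / 2) \<le> \<bar>f j\<bar> \<and> \<bar>sv j - f j\<bar> \<le> gram_bound \<delta> / sqrt m0 \<and>
      cnorm n (\<lambda>i. q j i - col_fn PL j i) \<le> left_bound \<delta>)"
proof -
  interpret A: spectral_basis "A * ctrans A" n "col_fn PL" "\<lambda>j. (sv j)\<^sup>2" by (rule gram_spectral_basis)
  have close: "cnorm n (\<lambda>i. mat_app (B * ctrans B) x i - mat_app (A * ctrans A) x i) \<le> gram_bound \<delta> * cnorm n x"
    for x using gram_perturbation[OF A_carrier B(1) entries B(2) \<delta>] unfolding gram_bound_def .
  note pert = A.perturbed_eigenbasis[OF gram_carrier[OF B(1)] gram_hermitian[OF B(1)] close gap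
      bounds_nonneg(1)[OF \<delta>(1)] small(1) small(3)[unfolded left_bound_def] card]
  show "card {z. eigenvalue (B * ctrans B) z} = card ((\<lambda>j. (sv j)\<^sup>2) ` {..<n})" by (fact pert(1))
  show "\<not> eigenvalue (B * ctrans B) 0"
  proof
    assume "eigenvalue (B * ctrans B) 0"
    then obtain j where j: "j < n" and "cmod (complex_of_real ((sv j)\<^sup>2)) \<le> gram_bound \<delta>"
      using pert(2) by force
    hence "(sv j)\<^sup>2 \<le> gram_bound \<delta>" by (simp only: norm_of_real abs_power2)
    thus False using m0 small(2) j by fastforce
  qed
  obtain q \<nu> where q: "orthonormal n n q"
    and q\<nu>: "\<forall>j<n. in_eigenspace (B * ctrans B) (complex_of_real (\<nu> j)) (q j) \<and>
      \<bar>\<nu> j - (sv j)\<^sup>2\<bar> \<le> gram_bound \<delta> \<and> cnorm n (\<lambda>i. q j i - col_fn PL j i) \<le> left_bound \<delta>"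
    using pert(3) unfolding left_bound_def by blast
  define f where "f j = sgn (sv j) * sqrt (\<nu> j)" for j
  have "(f j)\<^sup>2 = \<nu> j \<and> sqrt (m0 / 2) \<le> \<bar>f j\<bar> \<and> \<bar>sv j - f j\<bar> \<le> gram_bound \<delta> / sqrt m0" if j: "j < n" for j
    using singular_value_close[OF m0(1) m0(2)[rule_format, OF j] _ small(2)] q\<nu> j unfolding f_def by blast
  with q q\<nu> show "\<exists>q f. orthonormal n n q \<and> (\<forall>j<n. in_eigenspace (B * ctrans B) (complex_of_real ((f j)\<^sup>2)) (q j) \<and>
      sqrt (m0 / 2) \<le> \<bar>f j\<bar> \<and> \<bar>sv j - f j\<bar> \<le> gram_bound \<delta> / sqrt m0 \<and>
      cnorm n (\<lambda>i. q j i - col_fn PL j i) \<le> left_bound \<delta>)"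
    by (intro exI[of _ q] exI[of _ f]) auto
qed

lemma right_singular_vector_bound:
  assumes B: "B \<in> carrier_mat n m" "\<forall>i<n. \<forall>k<m. cmod (A $$ (i,k) - B $$ (i,k)) \<le> \<delta>" and \<delta>: "0 \<le> \<delta>"
    and j: "j < n" and x: "cnorm n x = 1" "cnorm n (\<lambda>i. x i - col_fn PL j i) \<le> left_bound \<delta>"
    and f: "sqrt (m0 / 2) \<le> \<bar>f\<bar>" "\<bar>sv j - f\<bar> \<le> gram_bound \<delta> / sqrt m0"
  shows "cnorm m (\<lambda>i. complex_of_real (1 / f) * mat_app (ctrans B) x i - col_fn PR j i) \<le> right_bound \<delta>"
proof -
  let ?K = "\<delta> * sqrt (real m * real n) + c * sqrt (real m * real n) * left_bound \<delta> + gram_bound \<delta> / sqrt m0"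
  have K: "0 \<le> ?K" using \<delta> entries(1) m0(1) bounds_nonneg[OF \<delta>] by simp
  have "0 < sqrt (m0 / 2)" using m0(1) by simp
  hence f0: "0 < \<bar>f\<bar>" using f(1) by linarith
  have "cnorm m (\<lambda>i. mat_app (ctrans B) x i - mat_app (ctrans A) (col_fn PL j) i)
      \<le> \<delta> * sqrt (real m * real n) * cnorm n x + c * sqrt (real m * real n) * cnorm n (\<lambda>i. x i - col_fn PL j i)"
    by (rule ctrans_app_close[OF A_carrier B(1) entries B(2) \<delta>])
  also have "\<dots> \<le> \<delta> * sqrt (real m * real n) + c * sqrt (real m * real n) * left_bound \<delta>"
    using x entries(1) by (simp add: mult_left_mono)
  finally have le_K: "cnorm m (\<lambda>i. mat_app (ctrans B) x i - mat_app (ctrans A) (col_fn PL j) i)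
      + \<bar>sv j - f\<bar> \<le> ?K" using f(2) by linarith
  have y: "\<forall>i<m. mat_app (ctrans A) (col_fn PL j) i = complex_of_real (sv j) * col_fn PR j i"
    using ctrans_A_col_PL[OF j] by blast
  have p: "cnorm m (col_fn PR j) = 1"
    using orthonormal_cnorm[OF unitary_col_fn_orthonormal[OF PR]] j n_le_m by simp
  have "cnorm m (\<lambda>i. complex_of_real (1 / f) * mat_app (ctrans B) x i - col_fn PR j i)
      \<le> (cnorm m (\<lambda>i. mat_app (ctrans B) x i - mat_app (ctrans A) (col_fn PL j) i) + \<bar>sv j - f\<bar>) / \<bar>f\<bar>"
    using f0 by (intro right_singular_vector_close[OF p _ y]) auto
  also have "\<dots> \<le> ?K / \<bar>f\<bar>" by (rule divide_right_mono[OF le_K abs_ge_zero])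
  also have "\<dots> \<le> ?K / sqrt (m0 / 2)"
    using f(1) f0 m0(1) K by (intro divide_left_mono) auto
  finally show ?thesis unfolding right_bound_def .
qed

lemma svd_perturbation:
  assumes B: "B \<in> carrier_mat n m" "\<forall>i<n. \<forall>k<m. cmod (A $$ (i,k) - B $$ (i,k)) \<le> \<delta>"
    and card: "card {z. eigenvalue (B * ctrans B) z} \<le> card ((\<lambda>j. (sv j)\<^sup>2) ` {..<n})"
    and \<delta>: "0 \<le> \<delta>" "\<delta> \<le> 1"
    and small: "gram_bound \<delta> \<le> g / 4" "gram_bound \<delta> \<le> m0 / 2" "left_bound \<delta> \<le> 1"
      "gs_const m * right_bound \<delta> \<le> 1"
  shows "\<not> eigenvalue (B * ctrans B) 0"
    and "card {z. eigenvalue (B * ctrans B) z} = card ((\<lambda>j. (sv j)\<^sup>2) ` {..<n})"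
    and "\<exists>QL F QR. QL \<in> unitary_mat n \<and> QR \<in> unitary_mat m \<and> F \<in> real_diag_mat n m \<and>
      B = QL * F * ctrans QR \<and>
      (\<forall>i<n. cmod (D $$ (i,i) - F $$ (i,i)) \<le> gram_bound \<delta> / sqrt m0) \<and>
      (\<forall>i<n. \<forall>j<n. cmod (QL $$ (i,j) - PL $$ (i,j)) \<le> left_bound \<delta>) \<and>
      (\<forall>i<m. \<forall>j<m. cmod (QR $$ (i,j) - PR $$ (i,j)) \<le> gs_const m * right_bound \<delta>)"
proof -
  note left = left_singular_perturbation[OF B card \<delta> small(1-3)]
  show "\<not> eigenvalue (B * ctrans B) 0" and "card {z. eigenvalue (B * ctrans B) z} = card ((\<lambda>j. (sv j)\<^sup>2) ` {..<n})"
    by (fact left(1,2))+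
  obtain q f where q: "orthonormal n n q"
    and qf: "\<forall>j<n. in_eigenspace (B * ctrans B) (complex_of_real ((f j)\<^sup>2)) (q j) \<and>
      sqrt (m0 / 2) \<le> \<bar>f j\<bar> \<and> \<bar>sv j - f j\<bar> \<le> gram_bound \<delta> / sqrt m0 \<and>
      cnorm n (\<lambda>i. q j i - col_fn PL j i) \<le> left_bound \<delta>"
    using left(3) by blast
  have "0 < sqrt (m0 / 2)" using m0(1) by simp
  hence f0: "\<forall>j<n. f j \<noteq> 0" using qf by force
  define r where "r j i = complex_of_real (1 / f j) * mat_app (ctrans B) (q j) i" for j i
  have r: "orthonormal m n r"
    unfolding r_def using qf f0 by (intro right_singular_vectors_orthonormal[OF B(1) q]) auto
  have "\<forall>j<n. cnorm m (\<lambda>i. r j i - col_fn PR j i) \<le> right_bound \<delta>"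
  proof (intro allI impI)
    fix j assume j: "j < n"
    show "cnorm m (\<lambda>i. r j i - col_fn PR j i) \<le> right_bound \<delta>"
      unfolding r_def using qf j by (intro right_singular_vector_bound[OF B \<delta>(1) j orthonormal_cnorm[OF q j]]) auto
  qed
  then obtain qR where qR: "orthonormal m m qR" "\<forall>j<n. qR j = r j"
    "\<forall>j<m. cnorm m (\<lambda>i. qR j i - col_fn PR j i) \<le> gs_const m * right_bound \<delta>"
    using orthonormal_extend_close[OF r unitary_col_fn_orthonormal[OF PR] n_le_m _ bounds_nonneg(3)[OF \<delta>(1)] small(4)]
    by blast
  have "\<forall>j<n. \<forall>i<m. qR j i = complex_of_real (1 / f j) * mat_app (ctrans B) (q j) i"
    using qR(2) unfolding r_def by simp
  with qf show "\<exists>QL F QR. QL \<in> unitary_mat n \<and> QR \<in> unitary_mat m \<and> F \<in> real_diag_mat n m \<and>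
      B = QL * F * ctrans QR \<and>
      (\<forall>i<n. cmod (D $$ (i,i) - F $$ (i,i)) \<le> gram_bound \<delta> / sqrt m0) \<and>
      (\<forall>i<n. \<forall>j<n. cmod (QL $$ (i,j) - PL $$ (i,j)) \<le> left_bound \<delta>) \<and>
      (\<forall>i<m. \<forall>j<m. cmod (QR $$ (i,j) - PR $$ (i,j)) \<le> gs_const m * right_bound \<delta>)"
    by (intro svd_of_close_singular_vectors[OF B(1) q qR(1) f0 _ _ _ qR(3)]) auto
qed

lemma svd_close:
  assumes pos: "\<forall>j<length ls. 1 \<le> ls ! j"
    and card: "card ((\<lambda>j. (sv j)\<^sup>2) ` {..<n}) = n - (\<Sum>j<length ls. ls ! j - 1)"
    and BM: "B \<in> M_C n m ls" and close: "\<forall>i<n. \<forall>j<m. cmod (A $$ (i,j) - B $$ (i,j)) < \<delta>"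
    and \<delta>: "0 < \<delta>" "\<delta> < 1"
    and small: "gram_bound \<delta> < g / 4" "gram_bound \<delta> < m0 / 2" "left_bound \<delta> < 1"
      "gs_const m * right_bound \<delta> < 1"
    and \<epsilon>: "gram_bound \<delta> / sqrt m0 < \<epsilon>" "left_bound \<delta> < \<epsilon>" "gs_const m * right_bound \<delta> < \<epsilon>"
  shows "\<not> eigenvalue (B * ctrans B) 0 \<and>
    card {z. eigenvalue (B * ctrans B) z} = n - (\<Sum>j<length ls. ls ! j - 1) \<and>
    (\<exists>QL F QR. QL \<in> unitary_mat n \<and> QR \<in> unitary_mat m \<and> F \<in> real_diag_mat n m \<and>
       B = QL * F * ctrans QR \<and>
       (\<forall>i<n. cmod (D $$ (i,i) - F $$ (i,i)) < \<epsilon>) \<and>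
       (\<forall>i<n. \<forall>j<n. cmod (QL $$ (i,j) - PL $$ (i,j)) < \<epsilon>) \<and>
       (\<forall>i<m. \<forall>j<m. cmod (QR $$ (i,j) - PR $$ (i,j)) < \<epsilon>))"
proof -
  have B: "B \<in> carrier_mat n m" using BM unfolding M_C_def by simp
  have le: "\<forall>i<n. \<forall>k<m. cmod (A $$ (i,k) - B $$ (i,k)) \<le> \<delta>" using close by (auto intro: less_imp_le)
  have card_B: "card {z. eigenvalue (B * ctrans B) z} \<le> card ((\<lambda>j. (sv j)\<^sup>2) ` {..<n})"
    using card_eigenvalues_gram_le[OF BM pos] card by simp
  note pert = svd_perturbation[OF B le card_B, OF less_imp_le[OF \<delta>(1)] less_imp_le[OF \<delta>(2)]
      less_imp_le[OF small(1)] less_imp_le[OF small(2)] less_imp_le[OF small(3)] less_imp_le[OF small(4)]]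
  obtain QL F QR where QL: "QL \<in> unitary_mat n" and QR: "QR \<in> unitary_mat m"
    and F: "F \<in> real_diag_mat n m" and svd_B: "B = QL * F * ctrans QR"
    and F_close: "\<forall>i<n. cmod (D $$ (i,i) - F $$ (i,i)) \<le> gram_bound \<delta> / sqrt m0"
    and QL_close: "\<forall>i<n. \<forall>j<n. cmod (QL $$ (i,j) - PL $$ (i,j)) \<le> left_bound \<delta>"
    and QR_close: "\<forall>i<m. \<forall>j<m. cmod (QR $$ (i,j) - PR $$ (i,j)) \<le> gs_const m * right_bound \<delta>"
    using pert(3) by blast
  show ?thesis
  proof (intro conjI exI)
    show "\<not> eigenvalue (B * ctrans B) 0" by (fact pert(1))
    show "card {z. eigenvalue (B * ctrans B) z} = n - (\<Sum>j<length ls. ls ! j - 1)"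
      using pert(2) card by simp
    show "\<forall>i<n. cmod (D $$ (i,i) - F $$ (i,i)) < \<epsilon>" using F_close \<epsilon> by force
    show "\<forall>i<n. \<forall>j<n. cmod (QL $$ (i,j) - PL $$ (i,j)) < \<epsilon>" using QL_close \<epsilon> by force
    show "\<forall>i<m. \<forall>j<m. cmod (QR $$ (i,j) - PR $$ (i,j)) < \<epsilon>" using QR_close \<epsilon> by force
  qed (fact QL QR F svd_B)+
qed

lemma svd_eventually_close:
  assumes pos: "\<forall>j<length ls. 1 \<le> ls ! j"
    and card: "card ((\<lambda>j. (sv j)\<^sup>2) ` {..<n}) = n - (\<Sum>j<length ls. ls ! j - 1)" and \<epsilon>: "0 < \<epsilon>"
  shows "\<forall>\<^sub>F \<delta> in at_right 0. \<forall>B \<in> M_C n m ls.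
    (\<forall>i<n. \<forall>j<m. cmod (A $$ (i,j) - B $$ (i,j)) < \<delta>) \<longrightarrow>
      \<not> eigenvalue (B * ctrans B) 0 \<and>
      card {z. eigenvalue (B * ctrans B) z} = n - (\<Sum>j<length ls. ls ! j - 1) \<and>
      (\<exists>QL F QR. QL \<in> unitary_mat n \<and> QR \<in> unitary_mat m \<and> F \<in> real_diag_mat n m \<and>
         B = QL * F * ctrans QR \<and>
         (\<forall>i<n. cmod (D $$ (i,i) - F $$ (i,i)) < \<epsilon>) \<and>
         (\<forall>i<n. \<forall>j<n. cmod (QL $$ (i,j) - PL $$ (i,j)) < \<epsilon>) \<and>
         (\<forall>i<m. \<forall>j<m. cmod (QR $$ (i,j) - PR $$ (i,j)) < \<epsilon>))"
proof -
  note lim = bounds_tendsto_0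
  have "\<forall>\<^sub>F \<delta> in at_right (0::real). 0 < \<delta>" by (rule eventually_at_right_less)
  moreover have "\<forall>\<^sub>F \<delta> in at_right (0::real). \<delta> < 1" by (rule order_tendstoD(2)[OF tendsto_ident_at]) simp
  moreover have "\<forall>\<^sub>F \<delta> in at_right 0. gram_bound \<delta> < min (g / 4) (min (m0 / 2) (\<epsilon> * sqrt m0))"
    using gap(1) m0(1) \<epsilon> by (intro order_tendstoD(2)[OF lim(1)]) simp
  moreover have "\<forall>\<^sub>F \<delta> in at_right 0. left_bound \<delta> < min 1 \<epsilon>"
    using \<epsilon> by (intro order_tendstoD(2)[OF lim(2)]) simp
  moreover have "\<forall>\<^sub>F \<delta> in at_right 0. gs_const m * right_bound \<delta> < min 1 \<epsilon>"
    using \<epsilon> by (intro order_tendstoD(2)[OF tendsto_mult_right_zero[OF lim(3)]]) simp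
  ultimately show ?thesis
    by eventually_elim
      (intro ballI impI svd_close[OF pos card], use m0(1) in \<open>auto simp: pos_divide_less_eq mult.commute\<close>)
qed

end

theorem lemma4p5:
  fixes d1 d2 :: nat and ls :: "nat list" and A PL D PR :: "complex mat"
  assumes "1 \<le> d1" and "d1 \<le> d2"
    and "1 \<le> length ls"
    and "\<forall>j<length ls. 1 \<le> ls ! j \<and> ls ! j \<le> d1"
    and "sum_list ls \<le> d1"
    and "A \<in> M_C d1 d2 ls"
    and "PL \<in> unitary_mat d1" and "PR \<in> unitary_mat d2" and "D \<in> real_diag_mat d1 d2"
    and "A = PL * D * ctrans PR"
    and "\<not> eigenvalue (A * ctrans A) 0"
    and "card {z. eigenvalue (A * ctrans A) z} = d1 - (\<Sum>j<length ls. ls ! j - 1)"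
  shows "\<forall>\<epsilon>>0. \<exists>\<delta>>0. \<forall>B \<in> M_C d1 d2 ls.
           (\<forall>i<d1. \<forall>j<d2. cmod (A $$ (i,j) - B $$ (i,j)) < \<delta>) \<longrightarrow>
             \<not> eigenvalue (B * ctrans B) 0 \<and>
             card {z. eigenvalue (B * ctrans B) z} = d1 - (\<Sum>j<length ls. ls ! j - 1) \<and>
             (\<exists>QL F QR. QL \<in> unitary_mat d1 \<and> QR \<in> unitary_mat d2 \<and> F \<in> real_diag_mat d1 d2 \<and>
                B = QL * F * ctrans QR \<and>
                (\<forall>i<d1. cmod (D $$ (i,i) - F $$ (i,i)) < \<epsilon>) \<and>
                (\<forall>i<d1. \<forall>j<d1. cmod (QL $$ (i,j) - PL $$ (i,j)) < \<epsilon>) \<and>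
                (\<forall>i<d2. \<forall>j<d2. cmod (QR $$ (i,j) - PR $$ (i,j)) < \<epsilon>))"
proof -
  interpret svd d1 d2 A PL D PR using assms by unfold_locales auto
  interpret A: spectral_basis "A * ctrans A" d1 "col_fn PL" "\<lambda>j. (sv j)\<^sup>2" by (rule gram_spectral_basis)
  have "\<forall>j<d1. 0 < (sv j)\<^sup>2" using assms(11) A.eigenvalue_iff[of 0] by force
  then obtain m0 where "0 < m0" "\<forall>j<d1. m0 \<le> (sv j)\<^sup>2"
    using finite_family_pos_lower_bound[of d1 "\<lambda>j. (sv j)\<^sup>2"] by blast
  moreover obtain g where "0 < g" "\<forall>i<d1. \<forall>j<d1. (sv i)\<^sup>2 \<noteq> (sv j)\<^sup>2 \<longrightarrow> g \<le> \<bar>(sv i)\<^sup>2 - (sv j)\<^sup>2\<bar>"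
    using finite_family_separated[of d1 "\<lambda>j. (sv j)\<^sup>2"] by blast
  moreover obtain c where "0 \<le> c" "\<forall>i<d1. \<forall>k<d2. cmod (A $$ (i,k)) \<le> c"
    using mat_entries_bounded[of d1 d2 A] by blast
  ultimately interpret svd_with_gap d1 d2 A PL D PR m0 g c by unfold_locales
  have pos: "\<forall>j<length ls. 1 \<le> ls ! j" using assms(4) by blast
  have "card ((\<lambda>j. (sv j)\<^sup>2) ` {..<d1}) = card {z. eigenvalue (A * ctrans A) z}"
    unfolding A.eigenvalues_eq by (rule card_image[symmetric]) (auto simp: inj_on_def)
  hence card: "card ((\<lambda>j. (sv j)\<^sup>2) ` {..<d1}) = d1 - (\<Sum>j<length ls. ls ! j - 1)" using assms(12) by simp
  show ?thesis by (intro allI impI eventually_at_right_0_exists svd_eventually_close[OF pos card])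
qed

end
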